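(* Let $\mathrm T=(\mathcal T,\{x_I\}_{I\in\mathcal T^*},\{r_I\}_{I\in\mathcal T^*})$ be an $s$-tree in a complete doubling metric space $(X,d)$ such that $\mathcal T$ is closed in $\Sigma_N$, and let $K$ be the $s$-set generated by $\mathrm T$. Then $K$ is $s$-regular, and $\dim_H K=\overline{\dim}_M K$.
   Context: Words: for $N\ge2$ let $A_N=\{0,\dots,N-1\}$ and $\Sigma_N=A_N^{\mathbb N}$ with the product topology. For $\mathcal T\subseteq\Sigma_N$, $\mathcal T^*$ is the set of all finite prefixes $\omega|_k=\omega_1\cdots\omega_k$ ($k\ge0$, $\omega|_0=\varnothing$ the empty word) of elements $\omega\in\mathcal T$, $|I|$ is the length of $I$, and $\mathcal T_k=\{I\in\mathcal T^*:|I|=k\}$. $IJ$ denotes concatenation. For finite or infinite words $x,y$ with $|x|\le|y|$, $x\prec y$ means $x$ is a prefix of $y$, and $x,y$ are incomparable if $x_k\ne y_k$ for some $1\le k\le|x|$. $s$-tree: Let $(X,d)$ be a metric space, $N\ge2$, $s\in[0,\infty)$, $\varnothing\ne\mathcal T\subseteq\Sigma_N$. A triple $(\mathcal T,\{x_I\}_{I\in\mathcal T^*},\{r_I\}_{I\in\mathcal T^*})$ with $x_I\in X$, $0<r_I<\infty$ is an $s$-tree if there are constants $\rho,C,D\in(0,\infty)$ with: (T1) $d(x_I,x_J)\ge C(r_I+r_J)$ for all incomparable $I,J\in\mathcal T^*$; (T2) $\operatorname{diam}\{x_{IJ}:IJ\in\mathcal T^*\}\le Dr_I$ for all $I\in\mathcal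 T^*$; (T3) $\sum_{|J|=n,\,IJ\in\mathcal T^*}r_{IJ}^s=r_I^s$ for all $I\in\mathcal T^*$, $n\ge0$; (T4) $r_I\to0$ as $|I|\to\infty$; (T5) $r_{Ij}\ge\rho r_I$ whenever $j\in A_N$, $Ij\in\mathcal T^*$. The $s$-set generated by the tree is $K=\{x_\omega:\omega\in\mathcal T,\ x_\omega \text{ exists}\}$, where $x_\omega=\lim_{n\to\infty}x_{\omega|_n}$. A compact set $K\subseteq X$ is $s$-regular if there are a Borel measure $\mu$ and constants $0<\alpha,\beta,R_0<\infty$ with $0<\mu(K)\le\mu(X)<\infty$ and $\alpha r^s<\mu(B(x,r))<\beta r^s$ for all $x\in K$, $0<r\le R_0$. $\dim_H$ is Hausdorff dimension and $\overline{\dim}_M$ upper Minkowski (box) dimension. *)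

theory Defs
  imports "HOL-Analysis.Analysis" "HOL-Library.Liminf_Limsup"
begin

text \<open>Infinite words over A_N = {0..N-1} are functions nat => nat (letter omega_{k+1}
of the paper is omega k here); finite words are lists.\<close>

definition Sigma_N :: "nat \<Rightarrow> (nat \<Rightarrow> nat) set" where
  "Sigma_N N = {\<omega>. \<forall>i. \<omega> i < N}"

definition word_prefix :: "(nat \<Rightarrow> nat) \<Rightarrow> nat \<Rightarrow> nat list" where
  "word_prefix \<omega> k = map \<omega> [0..<k]"

definition Tstar :: "(nat \<Rightarrow> nat) set \<Rightarrow> nat list set" where
  "Tstar T = {word_prefix \<omega> k | \<omega> k. \<omega> \<in> T}"

definition incomparable :: "nat list \<Rightarrow> nat list \<Rightarrow> bool" where
  "incomparable I J \<longleftrightarrow> (\<exists>k < min (length I) (length J). I ! k \<noteq> J ! k)"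

definition s_tree :: "nat \<Rightarrow> real \<Rightarrow> (nat \<Rightarrow> nat) set \<Rightarrow> (nat list \<Rightarrow> 'a::metric_space)
    \<Rightarrow> (nat list \<Rightarrow> real) \<Rightarrow> bool" where
  "s_tree N s T x r \<longleftrightarrow>
     N \<ge> 2 \<and> s \<ge> 0 \<and> T \<noteq> {} \<and> T \<subseteq> Sigma_N N \<and>
     (\<forall>I \<in> Tstar T. 0 < r I) \<and>
     (\<exists>\<rho> C D. 0 < \<rho> \<and> 0 < C \<and> 0 < D \<and>
       \<comment> \<open>(T1)\<close>
       (\<forall>I \<in> Tstar T. \<forall>J \<in> Tstar T. incomparable I J \<longrightarrow> dist (x I) (x J) \<ge> C * (r I + r J)) \<and>
       \<comment> \<open>(T2)\<close>
       (\<forall>I \<in> Tstar T. bounded {x (I @ J) | J. I @ J \<in> Tstar T} \<and>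
                       diameter {x (I @ J) | J. I @ J \<in> Tstar T} \<le> D * r I) \<and>
       \<comment> \<open>(T3)\<close>
       (\<forall>I \<in> Tstar T. \<forall>n::nat.
          (\<Sum>J \<in> {J. length J = n \<and> I @ J \<in> Tstar T}. r (I @ J) powr s) = r I powr s) \<and>
       \<comment> \<open>(T4)\<close>
       (\<forall>\<epsilon>>0. \<exists>m. \<forall>I \<in> Tstar T. length I \<ge> m \<longrightarrow> r I < \<epsilon>) \<and>
       \<comment> \<open>(T5)\<close>
       (\<forall>I j. j < N \<longrightarrow> I @ [j] \<in> Tstar T \<longrightarrow> r (I @ [j]) \<ge> \<rho> * r I))"

definition s_set :: "(nat \<Rightarrow> nat) set \<Rightarrow> (nat list \<Rightarrow> 'a::metric_space) \<Rightarrow> 'a set" where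
  "s_set T x = {p. \<exists>\<omega> \<in> T. (\<lambda>n. x (word_prefix \<omega> n)) \<longlonglongrightarrow> p}"

definition doubling_space :: "'a::metric_space itself \<Rightarrow> bool" where
  "doubling_space _ \<longleftrightarrow> (\<exists>M::nat. \<forall>(z::'a) \<rho>. \<rho> > 0 \<longrightarrow>
      (\<exists>F. finite F \<and> card F \<le> M \<and> ball z \<rho> \<subseteq> (\<Union>y\<in>F. ball y (\<rho> / 2))))"

definition s_regular :: "real \<Rightarrow> 'a::metric_space set \<Rightarrow> bool" where
  "s_regular s K \<longleftrightarrow> compact K \<and>
     (\<exists>(\<mu>::'a measure) \<alpha> \<beta> R0. sets \<mu> = sets borel \<and> 0 < \<alpha> \<and> 0 < \<beta> \<and> 0 < R0 \<and>
        0 < emeasure \<mu> K \<and> emeasure \<mu> (space \<mu>) < \<infinity> \<and>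
        (\<forall>z \<in> K. \<forall>\<rho>. 0 < \<rho> \<and> \<rho> \<le> R0 \<longrightarrow>
           ennreal (\<alpha> * \<rho> powr s) < emeasure \<mu> (ball z \<rho>) \<and>
           emeasure \<mu> (ball z \<rho>) < ennreal (\<beta> * \<rho> powr s)))"

text \<open>Hausdorff measure via countable delta-covers (Isabelle's diam is 0 on unbounded sets,
  so covering sets are required to be bounded; diam^0 := 1 for nonempty sets).\<close>

definition hausdorff_pre :: "real \<Rightarrow> real \<Rightarrow> 'a::metric_space set \<Rightarrow> ennreal" where
  "hausdorff_pre s \<delta> A = (INF C \<in> {C :: nat \<Rightarrow> 'a set. A \<subseteq> (\<Union>i. C i) \<and>
        (\<forall>i. bounded (C i) \<and> diameter (C i) \<le> \<delta>)}.
      (\<Sum>i. ennreal (if C i = {} then 0 else if s = 0 then 1 else diameter (C i) powr s)))"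

definition hausdorff_measure :: "real \<Rightarrow> 'a::metric_space set \<Rightarrow> ennreal" where
  "hausdorff_measure s A = (SUP \<delta> \<in> {0<..}. hausdorff_pre s \<delta> A)"

definition hausdorff_dim :: "'a::metric_space set \<Rightarrow> ereal" where
  "hausdorff_dim A = Inf {ereal s | s. s \<ge> 0 \<and> hausdorff_measure s A = 0}"

definition covering_number :: "'a::metric_space set \<Rightarrow> real \<Rightarrow> nat" where
  "covering_number A \<delta> = Inf {card F | F. finite F \<and> A \<subseteq> \<Union>F \<and> (\<forall>B\<in>F. bounded B \<and> diameter B \<le> \<delta>)}"

definition upper_minkowski_dim :: "'a::metric_space set \<Rightarrow> ereal" where
  "upper_minkowski_dim A =
     Limsup (at_right 0) (\<lambda>\<delta>. ereal (ln (real (covering_number A \<delta>)) / - ln \<delta>))"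

end

theory Submission
  imports Defs
begin

text \<open>
  Code every word \<open>I\<close> of the tree by a half-open interval of length \<open>r\<^sub>I\<^sup>s\<close>; by (T3) the
  intervals of the children of \<open>I\<close> tile the interval of \<open>I\<close>. A point \<open>t\<close> of the root
  interval thus determines an infinite word of \<open>T\<close> (closedness of \<open>T\<close> is used here), and
  pushing Lebesgue measure forward along \<open>t \<mapsto> x\<^sub>\<omega>\<close> gives a finite measure \<open>\<mu>\<close> on \<open>K\<close>.
  Given \<open>z \<in> K\<close> and a small radius \<open>e\<close>, stop every infinite word at its first prefix \<open>I\<close>
  with \<open>r\<^sub>I \<le> e\<close>; by (T5) the stopping words have \<open>r\<^sub>I > \<rho> e\<close>. The stopping word of the
  address of \<open>z\<close> has, by (T2), its whole interval mapped into \<open>B(z, e)\<close>, which bounds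
  \<open>\<mu>(B(z, e))\<close> below by a multiple of \<open>e\<^sup>s\<close>. Conversely the stopping words met by points of
  \<open>B(z, e)\<close> carry points \<open>x\<^sub>I\<close> that are \<open>2 C \<rho> e\<close>-separated by (T1) and lie in a ball of
  radius \<open>(1 + D) e\<close>, so doubling bounds their number and \<open>\<mu>(B(z, e))\<close> is at most a multiple
  of \<open>e\<^sup>s\<close>. Finally, on any \<open>s\<close>-regular set the lower mass bound yields covers by
  \<open>O(\<delta>\<^sup>-\<^sup>s)\<close> sets of diameter \<open>\<delta>\<close>, while the upper mass bound (mass distribution
  principle) bounds covering numbers and Hausdorff measures from below, so that both the
  Hausdorff and the upper Minkowski dimension equal \<open>s\<close>.
\<close>

section \<open>Separated sets and small covers\<close>

definition separated :: "real \<Rightarrow> 'a::metric_space set \<Rightarrow> bool" where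
  "separated e E \<longleftrightarrow> (\<forall>p\<in>E. \<forall>q\<in>E. p \<noteq> q \<longrightarrow> e \<le> dist p q)"

definition finite_delta_cover :: "real \<Rightarrow> 'a::metric_space set \<Rightarrow> 'a set set \<Rightarrow> bool" where
  "finite_delta_cover \<delta> A F \<longleftrightarrow> finite F \<and> A \<subseteq> \<Union>F \<and> (\<forall>B\<in>F. bounded B \<and> diameter B \<le> \<delta>)"

lemma diameter_cball_le:
  fixes z :: "'a::metric_space"
  assumes "0 \<le> e"
  shows "diameter (cball z e) \<le> 2 * e"
proof -
  have "dist p q \<le> 2 * e" if "p \<in> cball z e" "q \<in> cball z e" for p q
    using that dist_triangle3[of p q z] by simp
  thus ?thesis using assms unfolding diameter_def by (auto intro!: cSUP_least)
qed

lemma separated_subset_card_le: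
  assumes F: "finite F" and cover: "E \<subseteq> (\<Union>y\<in>F. ball y \<delta>)" and sep: "separated (2 * \<delta>) E"
  shows "card E \<le> card F"
proof -
  have "\<forall>p\<in>E. \<exists>y\<in>F. p \<in> ball y \<delta>" using cover by blast
  then obtain f where f: "\<And>p. p \<in> E \<Longrightarrow> f p \<in> F \<and> p \<in> ball (f p) \<delta>"
    by metis
  have "inj_on f E"
  proof (rule inj_onI, rule ccontr)
    fix p q assume pq: "p \<in> E" "q \<in> E" "f p = f q" "p \<noteq> q"
    have "dist p q \<le> dist (f p) p + dist (f p) q" by (rule dist_triangle3)
    also have "\<dots> < 2 * \<delta>" using f[OF pq(1)] f[OF pq(2)] pq(3) by simp
    finally show False using sep pq unfolding separated_def by force
  qed
  thus ?thesis using f F by (intro card_inj_on_le) auto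
qed

lemma maximal_separated_subset:
  fixes K :: "'a::metric_space set"
  assumes e: "0 < e"
    and bound: "\<And>E. finite E \<Longrightarrow> E \<subseteq> K \<Longrightarrow> separated e E \<Longrightarrow> card E \<le> n"
  obtains E where "finite E" "E \<subseteq> K" "separated e E" "K \<subseteq> (\<Union>z\<in>E. ball z e)"
proof -
  let ?P = "\<lambda>E. finite E \<and> E \<subseteq> K \<and> separated e E"
  have "\<exists>E. ?P E \<and> (\<forall>E'. ?P E' \<longrightarrow> card E' \<le> card E)"
  proof (rule ex_has_greatest_nat[of ?P "{}" card "Suc n"])
    show "?P {}" by (simp add: separated_def)
    show "\<forall>E. ?P E \<longrightarrow> card E < Suc n" using bound by (simp add: less_Suc_eq_le)
  qed
  then obtain E where E: "?P E" and max: "\<And>E'. ?P E' \<Longrightarrow> card E' \<le> card E" by blast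
  have "K \<subseteq> (\<Union>z\<in>E. ball z e)"
  proof
    fix p assume p: "p \<in> K"
    show "p \<in> (\<Union>z\<in>E. ball z e)"
    proof (rule ccontr)
      assume far: "p \<notin> (\<Union>z\<in>E. ball z e)"
      hence far': "e \<le> dist p q" "e \<le> dist q p" if "q \<in> E" for q
        using that by (auto simp: not_less) (metis dist_commute)
      hence "p \<notin> E" using e by fastforce
      moreover have "separated e (insert p E)"
        using E far' unfolding separated_def by blast
      hence "?P (insert p E)" using E p by simp
      ultimately show False using max[of "insert p E"] E by simp
    qed
  qed
  thus ?thesis using E that by blast
qed

lemma separated_card_mass_le:
  fixes \<mu> :: "'a::metric_space measure"
  assumes sets: "sets \<mu> = sets borel" and E: "finite E" "separated (2 * e) E" and c: "0 \<le> c"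
    and mass: "\<And>z. z \<in> E \<Longrightarrow> ennreal c \<le> emeasure \<mu> (ball z e)"
  shows "ennreal (real (card E) * c) \<le> emeasure \<mu> (space \<mu>)"
proof -
  have disj: "disjoint_family_on (\<lambda>z. ball z e) E"
    unfolding disjoint_family_on_def
  proof (intro ballI impI)
    fix p q assume pq: "p \<in> E" "q \<in> E" "p \<noteq> q"
    have "2 * e \<le> dist p q" using E(2) pq unfolding separated_def by blast
    hence "\<not> (dist p y < e \<and> dist q y < e)" for y using dist_triangle2[of p q y] by linarith
    thus "ball p e \<inter> ball q e = {}" by auto
  qed
  have "ennreal (real (card E) * c) = (\<Sum>z\<in>E. ennreal c)"
    using c by (simp add: ennreal_mult ennreal_of_nat_eq_real_of_nat)
  also have "\<dots> \<le> (\<Sum>z\<in>E. emeasure \<mu> (ball z e))" by (intro sum_mono mass)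
  also have "\<dots> = emeasure \<mu> (\<Union>z\<in>E. ball z e)"
    using E(1) disj by (intro sum_emeasure) (auto simp: sets)
  also have "\<dots> \<le> emeasure \<mu> (space \<mu>)" by (rule emeasure_space)
  finally show ?thesis .
qed

text \<open>A lower mass bound yields small covers: a maximal \<open>\<delta>/2\<close>-separated subset is finite,
  because the balls of radius \<open>\<delta>/4\<close> around its points are disjoint and each has mass at
  least \<open>\<alpha> (\<delta>/4)^s\<close>.\<close>

lemma small_covers_of_lower_mass_bound:
  fixes \<mu> :: "'a::metric_space measure"
  assumes sets: "sets \<mu> = sets borel" and fin: "emeasure \<mu> (space \<mu>) < \<infinity>" and \<alpha>: "0 < \<alpha>"
    and lower: "\<And>z e. z \<in> K \<Longrightarrow> 0 < e \<Longrightarrow> e \<le> R0 \<Longrightarrow> ennreal (\<alpha> * e powr s) \<le> emeasure \<mu> (ball z e)"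
    and \<delta>: "0 < \<delta>" "\<delta> \<le> 4 * R0"
  obtains F where "finite_delta_cover \<delta> K F"
    "real (card F) \<le> measure \<mu> (space \<mu>) * 4 powr s / \<alpha> / \<delta> powr s"
proof -
  define M where "M = measure \<mu> (space \<mu>)"
  have M: "emeasure \<mu> (space \<mu>) = ennreal M" "0 \<le> M"
    using fin by (auto simp: M_def emeasure_eq_ennreal_measure)
  define c where "c = \<alpha> * (\<delta> / 4) powr s"
  have c: "0 < c" using \<alpha> \<delta> by (simp add: c_def)
  have card_le: "real (card E) \<le> M / c" if E: "finite E" "E \<subseteq> K" "separated (\<delta> / 2) E" for E
  proof -
    have sep: "separated (2 * (\<delta> / 4)) E" using E(3) by simp
    have "ennreal (real (card E) * c) \<le> ennreal M"
      unfolding M(1)[symmetric]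
    proof (rule separated_card_mass_le[OF sets E(1) sep])
      show "0 \<le> c" using c by simp
      fix z assume "z \<in> E"
      thus "ennreal c \<le> emeasure \<mu> (ball z (\<delta> / 4))"
        unfolding c_def using E(2) \<delta> by (intro lower) auto
    qed
    thus ?thesis using c M(2) by (simp add: le_divide_eq)
  qed
  obtain E where E: "finite E" "E \<subseteq> K" "separated (\<delta> / 2) E" "K \<subseteq> (\<Union>z\<in>E. ball z (\<delta> / 2))"
  proof (rule maximal_separated_subset[of "\<delta> / 2" K "nat \<lfloor>M / c\<rfloor>"])
    show "card E \<le> nat \<lfloor>M / c\<rfloor>" if "finite E" "E \<subseteq> K" "separated (\<delta> / 2) E" for E
      using card_le[OF that] by linarith
  qed (use \<delta> in auto)
  define F where "F = (\<lambda>z. cball z (\<delta> / 2)) ` E"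
  have "finite_delta_cover \<delta> K F"
    unfolding finite_delta_cover_def
  proof (intro conjI ballI)
    show "finite F" using E(1) by (simp add: F_def)
    show "K \<subseteq> \<Union>F" using E(4) by (force simp: F_def)
    fix B assume "B \<in> F"
    then obtain z where "B = cball z (\<delta> / 2)" by (auto simp: F_def)
    thus "bounded B" "diameter B \<le> \<delta>" using diameter_cball_le[of "\<delta> / 2" z] \<delta> by simp_all
  qed
  moreover have "real (card F) \<le> M * 4 powr s / \<alpha> / \<delta> powr s"
  proof -
    have "real (card F) \<le> real (card E)" unfolding F_def by (simp add: card_image_le E(1))
    also have "\<dots> \<le> M / c" by (rule card_le[OF E(1-3)])
    also have "M / c = M * 4 powr s / \<alpha> / \<delta> powr s"
      using \<delta> by (simp add: c_def powr_divide)
    finally show ?thesis .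
  qed
  ultimately show ?thesis using that by (simp add: M_def)
qed

lemma cball_mass_le:
  fixes \<mu> :: "'a::metric_space measure"
  assumes sets: "sets \<mu> = sets borel"
    and upper: "\<And>z e. z \<in> K \<Longrightarrow> 0 < e \<Longrightarrow> e \<le> R0 \<Longrightarrow> emeasure \<mu> (ball z e) \<le> ennreal (\<beta> * e powr s)"
    and \<beta>: "0 \<le> \<beta>" and z: "z \<in> K" and d: "0 \<le> d" "2 * d \<le> R0" "0 < d \<or> 0 < s" and R0: "0 < R0"
  shows "emeasure \<mu> (cball z d) \<le> ennreal (\<beta> * 2 powr s * d powr s)"
proof (cases "0 < d")
  case True
  have "emeasure \<mu> (cball z d) \<le> emeasure \<mu> (ball z (2 * d))"
    using True by (intro emeasure_mono) (auto simp: sets)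
  also have "\<dots> \<le> ennreal (\<beta> * (2 * d) powr s)" using True d by (intro upper[OF z]) auto
  finally show ?thesis by (simp add: powr_mult mult.assoc)
next
  case False
  hence d0: "d = 0" and s: "0 < s" using d by auto
  \<comment> \<open>\<open>cball z 0 = {z}\<close> lies in every small ball, whose mass tends to \<open>0\<close> since \<open>s > 0\<close>.\<close>
  have "emeasure \<mu> (cball z d) \<le> 0"
  proof (rule ennreal_le_epsilon)
    fix c :: real assume c: "0 < c"
    define e where "e = min R0 ((c / (\<beta> + 1)) powr (1 / s))"
    have e: "0 < e" "e \<le> R0" using R0 c \<beta> by (auto simp: e_def)
    have "emeasure \<mu> (cball z d) \<le> emeasure \<mu> (ball z e)"
      using e d0 by (intro emeasure_mono) (auto simp: sets)
    also have "\<dots> \<le> ennreal (\<beta> * e powr s)" using e by (intro upper[OF z]) auto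
    also have "\<beta> * e powr s \<le> (\<beta> + 1) * ((c / (\<beta> + 1)) powr (1 / s)) powr s"
      using e s \<beta> by (intro mult_mono powr_mono2) (auto simp: e_def)
    also have "\<dots> = c" using s \<beta> c by (simp add: powr_powr)
    finally show "emeasure \<mu> (cball z d) \<le> 0 + ennreal c" by (simp add: ennreal_leI)
  qed
  thus ?thesis by simp
qed

section \<open>Dimensions of regular sets\<close>

lemma covering_number_eq: "covering_number A \<delta> = Inf {card F | F. finite_delta_cover \<delta> A F}"
  by (simp add: covering_number_def finite_delta_cover_def)

lemma covering_number_le_card:
  assumes "finite_delta_cover \<delta> A F"
  shows "covering_number A \<delta> \<le> card F"
  unfolding covering_number_eq using assms by (intro cInf_lower) auto

lemma covering_number_attained:
  assumes "finite_delta_cover \<delta> A F"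
  obtains F' where "finite_delta_cover \<delta> A F'" "card F' = covering_number A \<delta>"
proof -
  have "covering_number A \<delta> \<in> {card F | F. finite_delta_cover \<delta> A F}"
    unfolding covering_number_eq using assms by (intro Inf_nat_def1) auto
  thus ?thesis using that by auto
qed

definition hausdorff_weight :: "real \<Rightarrow> 'a::metric_space set \<Rightarrow> real" where
  "hausdorff_weight t B = (if B = {} then 0 else if t = 0 then 1 else diameter B powr t)"

lemma hausdorff_weight_nonneg: "0 \<le> hausdorff_weight t B"
  by (simp add: hausdorff_weight_def)

lemma hausdorff_pre_eq:
  "hausdorff_pre t \<delta> A = (INF C \<in> {C. A \<subseteq> (\<Union>i. C i) \<and> (\<forall>i. bounded (C i) \<and> diameter (C i) \<le> \<delta>)}.
      \<Sum>i. ennreal (hausdorff_weight t (C i)))"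
  by (simp add: hausdorff_pre_def hausdorff_weight_def)

lemma hausdorff_pre_antimono:
  assumes "\<delta> \<le> \<delta>'"
  shows "hausdorff_pre t \<delta>' A \<le> hausdorff_pre t \<delta> A"
  unfolding hausdorff_pre_eq using assms
    by (intro INF_superset_mono) (auto simp: order.trans[OF _ assms])

lemma hausdorff_pre_le_card_cover:
  assumes cover: "finite_delta_cover \<delta> A F" and \<delta>: "0 \<le> \<delta>" and t: "0 < t"
  shows "hausdorff_pre t \<delta> A \<le> ennreal (real (card F) * \<delta> powr t)"
proof -
  have F: "finite F" "A \<subseteq> \<Union>F" "\<And>B. B \<in> F \<Longrightarrow> bounded B \<and> diameter B \<le> \<delta>"
    using cover by (auto simp: finite_delta_cover_def)
  obtain h where h: "bij_betw h {..<card F} F"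
    using ex_bij_betw_nat_finite[OF F(1)] by (auto simp: atLeast0LessThan)
  define C where "C i = (if i < card F then h i else {})" for i
  have hF: "bounded (h i) \<and> diameter (h i) \<le> \<delta>" if "i < card F" for i
    using h that F(3) by (auto simp: bij_betw_def)
  have cover_C: "A \<subseteq> (\<Union>i. C i)"
  proof
    fix p assume "p \<in> A"
    then obtain B where B: "B \<in> F" "p \<in> B" using F(2) by blast
    have "B \<in> h ` {..<card F}" using h B(1) by (simp add: bij_betw_def)
    then obtain i where "i < card F" "B = h i" by auto
    thus "p \<in> (\<Union>i. C i)" using B(2) unfolding C_def by (intro UN_I[of i]) auto
  qed
  have small_C: "bounded (C i) \<and> diameter (C i) \<le> \<delta>" for i
    using hF[of i] \<delta> by (simp add: C_def)
  define b where "b i = ennreal (if i < card F then \<delta> powr t else 0)" for i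
  have weight_le: "ennreal (hausdorff_weight t (C i)) \<le> b i" for i
  proof (cases "i < card F")
    case True
    have "diameter (h i) powr t \<le> \<delta> powr t"
      using hF[OF True] diameter_ge_0[of "h i"] t by (intro powr_mono2) auto
    thus ?thesis using True t by (simp add: C_def b_def hausdorff_weight_def)
  next
    case False
    thus ?thesis by (simp add: C_def b_def hausdorff_weight_def)
  qed
  have "hausdorff_pre t \<delta> A \<le> (\<Sum>i. ennreal (hausdorff_weight t (C i)))"
    unfolding hausdorff_pre_eq by (rule INF_lower) (simp add: cover_C small_C)
  also have "\<dots> \<le> (\<Sum>i. b i)" by (rule suminf_le[OF weight_le summableI summableI])
  also have "\<dots> = (\<Sum>i<card F. b i)" by (rule suminf_finite) (simp_all add: b_def)
  also have "\<dots> = ennreal (real (card F) * \<delta> powr t)"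
    by (simp add: b_def ennreal_mult ennreal_of_nat_eq_real_of_nat)
  finally show ?thesis .
qed

lemma hausdorff_measure_eq_0_if_small_covers:
  assumes s: "0 \<le> s" "s < t" and c: "0 \<le> c" and \<delta>0: "0 < \<delta>0"
    and covers: "\<And>\<delta>. 0 < \<delta> \<Longrightarrow> \<delta> \<le> \<delta>0 \<Longrightarrow>
      \<exists>F. finite_delta_cover \<delta> A F \<and> real (card F) \<le> c / \<delta> powr s"
  shows "hausdorff_measure t A = 0"
proof -
  have small: "hausdorff_pre t \<delta> A \<le> ennreal \<epsilon>" if \<delta>: "0 < \<delta>" and \<epsilon>: "0 < \<epsilon>" for \<delta> \<epsilon>
  proof -
    define \<eta> where "\<eta> = min (min \<delta> \<delta>0) ((\<epsilon> / (c + 1)) powr (1 / (t - s)))"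
    have \<eta>: "0 < \<eta>" "\<eta> \<le> \<delta>" "\<eta> \<le> \<delta>0" "\<eta> \<le> (\<epsilon> / (c + 1)) powr (1 / (t - s))"
      using \<delta> \<epsilon> \<delta>0 c unfolding \<eta>_def by auto
    obtain F where F: "finite_delta_cover \<eta> A F" "real (card F) \<le> c / \<eta> powr s"
      using covers[OF \<eta>(1,3)] by blast
    have "real (card F) * \<eta> powr t \<le> c / \<eta> powr s * \<eta> powr t"
      using F(2) by (intro mult_right_mono) auto
    also have "\<dots> = c * \<eta> powr (t - s)" using \<eta> by (simp add: powr_diff)
    also have "\<dots> \<le> c * ((\<epsilon> / (c + 1)) powr (1 / (t - s))) powr (t - s)"
      using \<eta> s c by (intro mult_left_mono powr_mono2) auto
    also have "\<dots> = c * (\<epsilon> / (c + 1))" using s \<epsilon> c by (simp add: powr_powr)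
    also have "\<dots> \<le> (c + 1) * (\<epsilon> / (c + 1))" using c \<epsilon> by (intro mult_right_mono) auto
    also have "\<dots> = \<epsilon>" using c by simp
    finally have bound: "real (card F) * \<eta> powr t \<le> \<epsilon>" .
    have "hausdorff_pre t \<delta> A \<le> hausdorff_pre t \<eta> A" by (rule hausdorff_pre_antimono[OF \<eta>(2)])
    also have "\<dots> \<le> ennreal (real (card F) * \<eta> powr t)"
      using \<eta> s by (intro hausdorff_pre_le_card_cover[OF F(1)]) auto
    also have "\<dots> \<le> ennreal \<epsilon>" using bound by (rule ennreal_leI)
    finally show ?thesis .
  qed
  have "hausdorff_pre t \<delta> A \<le> 0" if \<delta>: "0 < \<delta>" for \<delta>
  proof (rule ennreal_le_epsilon)
    fix \<epsilon> :: real assume "0 < \<epsilon>"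
    thus "hausdorff_pre t \<delta> A \<le> 0 + ennreal \<epsilon>" using small[OF \<delta>] by simp
  qed
  thus ?thesis unfolding hausdorff_measure_def by simp
qed

lemma mass_le_card_cover:
  fixes \<mu> :: "'a::metric_space measure"
  assumes sets: "sets \<mu> = sets borel"
    and upper: "\<And>z e. z \<in> K \<Longrightarrow> 0 < e \<Longrightarrow> e \<le> R0 \<Longrightarrow> emeasure \<mu> (ball z e) \<le> ennreal (\<beta> * e powr s)"
    and \<beta>: "0 \<le> \<beta>" and R0: "0 < R0" and cover: "finite_delta_cover \<delta> K F"
    and \<delta>: "0 < \<delta>" "2 * \<delta> \<le> R0"
  shows "emeasure \<mu> K \<le> ennreal (real (card F) * (\<beta> * 2 powr s * \<delta> powr s))"
proof -
  have F: "finite F" "K \<subseteq> \<Union>F" "\<And>B. B \<in> F \<Longrightarrow> bounded B \<and> diameter B \<le> \<delta>"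
    using cover by (auto simp: finite_delta_cover_def)
  define F' where "F' = {B \<in> F. B \<inter> K \<noteq> {}}"
  have "\<forall>B\<in>F'. \<exists>z. z \<in> B \<inter> K" by (auto simp: F'_def)
  then obtain z where z: "\<And>B. B \<in> F' \<Longrightarrow> z B \<in> B \<inter> K" by metis
  have fin: "finite F'" using F(1) by (simp add: F'_def)
  have "K \<subseteq> (\<Union>B\<in>F'. cball (z B) \<delta>)"
  proof
    fix p assume p: "p \<in> K"
    then obtain B where B: "B \<in> F" "p \<in> B" using F(2) by blast
    hence BF': "B \<in> F'" using p by (auto simp: F'_def)
    have "dist (z B) p \<le> diameter B" using z[OF BF'] B F(3) by (intro diameter_bounded_bound) auto
    also have "\<dots> \<le> \<delta>" using F(3) B by blast
    finally show "p \<in> (\<Union>B\<in>F'. cball (z B) \<delta>)" using BF' by auto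
  qed
  hence "emeasure \<mu> K \<le> emeasure \<mu> (\<Union>B\<in>F'. cball (z B) \<delta>)"
    using fin by (intro emeasure_mono) (auto simp: sets)
  also have "\<dots> \<le> (\<Sum>B\<in>F'. emeasure \<mu> (cball (z B) \<delta>))"
    using fin by (intro emeasure_subadditive_finite) (auto simp: sets)
  also have "\<dots> \<le> (\<Sum>B\<in>F'. ennreal (\<beta> * 2 powr s * \<delta> powr s))"
  proof (rule sum_mono)
    fix B assume "B \<in> F'"
    with z show "emeasure \<mu> (cball (z B) \<delta>) \<le> ennreal (\<beta> * 2 powr s * \<delta> powr s)"
      using \<delta> by (intro cball_mass_le[OF sets upper \<beta> _ _ _ _ R0]) auto
  qed
  also have "\<dots> = ennreal (real (card F') * (\<beta> * 2 powr s * \<delta> powr s))"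
    using \<beta> by (simp add: ennreal_mult ennreal_of_nat_eq_real_of_nat)
  also have "\<dots> \<le> ennreal (real (card F) * (\<beta> * 2 powr s * \<delta> powr s))"
    using card_mono[OF F(1), of F'] \<beta> by (intro ennreal_leI mult_right_mono) (auto simp: F'_def)
  finally show ?thesis .
qed

text \<open>Mass distribution principle: a set of diameter \<open>d\<close> meeting \<open>K\<close> lies in a ball of
  radius \<open>2 d\<close> centred in \<open>K\<close>, so the \<open>t\<close>-weights of a fine cover dominate a fixed
  multiple of \<open>\<mu> K\<close>.\<close>

lemma mass_le_hausdorff_weights:
  fixes \<mu> :: "'a::metric_space measure"
  assumes sets: "sets \<mu> = sets borel"
    and upper: "\<And>z e. z \<in> K \<Longrightarrow> 0 < e \<Longrightarrow> e \<le> R0 \<Longrightarrow> emeasure \<mu> (ball z e) \<le> ennreal (\<beta> * e powr s)"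
    and \<beta>: "0 < \<beta>" and R0: "0 < R0" and t: "0 \<le> t" "t < s"
    and C: "K \<subseteq> (\<Union>i. C i)" "\<And>i. bounded (C i)" "\<And>i. diameter (C i) \<le> min 1 (R0 / 2)"
  shows "emeasure \<mu> K \<le> ennreal (\<beta> * 2 powr s) * (\<Sum>i. ennreal (hausdorff_weight t (C i)))"
proof -
  define c where "c = \<beta> * 2 powr s"
  have c: "0 < c" using \<beta> by (simp add: c_def)
  have "\<forall>i. \<exists>z. C i \<inter> K \<noteq> {} \<longrightarrow> z \<in> C i \<inter> K" by blast
  then obtain z where z: "\<And>i. C i \<inter> K \<noteq> {} \<Longrightarrow> z i \<in> C i \<inter> K" by metis
  define f where "f i = (if C i \<inter> K \<noteq> {} then cball (z i) (diameter (C i)) else {})" for i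
  have "K \<subseteq> (\<Union>i. f i)"
  proof
    fix p assume p: "p \<in> K"
    then obtain i where i: "p \<in> C i" using C(1) by blast
    hence ne: "C i \<inter> K \<noteq> {}" using p by blast
    have "dist (z i) p \<le> diameter (C i)"
      using z[OF ne] i C(2) by (intro diameter_bounded_bound) auto
    thus "p \<in> (\<Union>i. f i)" using ne by (auto simp: f_def)
  qed
  have f_sets: "range f \<subseteq> sets \<mu>" by (auto simp: f_def sets)
  have f_mass: "emeasure \<mu> (f i) \<le> ennreal c * ennreal (hausdorff_weight t (C i))" for i
  proof (cases "C i \<inter> K \<noteq> {}")
    case True
    define d where "d = diameter (C i)"
    have d: "0 \<le> d" "d \<le> 1" "2 * d \<le> R0"
      using diameter_ge_0[OF C(2)] C(3)[of i] by (auto simp: d_def)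
    have "emeasure \<mu> (f i) \<le> ennreal (c * d powr s)"
      using cball_mass_le[OF sets upper _ _ d(1,3) _ R0] z[OF True] \<beta> t
      by (simp add: f_def True c_def d_def)
    also have "d powr s \<le> (if t = 0 then 1 else d powr t)"
      using d t by (auto simp: powr_le1 powr_mono')
    hence "ennreal (c * d powr s) \<le> ennreal (c * hausdorff_weight t (C i))"
      using True c by (intro ennreal_leI mult_left_mono) (auto simp: hausdorff_weight_def d_def)
    finally show ?thesis using c by (simp add: ennreal_mult hausdorff_weight_nonneg)
  next
    case False
    thus ?thesis by (simp add: f_def)
  qed
  have "emeasure \<mu> K \<le> emeasure \<mu> (\<Union>i. f i)"
    using \<open>K \<subseteq> (\<Union>i. f i)\<close> f_sets by (intro emeasure_mono) auto
  also have "\<dots> \<le> (\<Sum>i. emeasure \<mu> (f i))" by (rule emeasure_subadditive_countably[OF f_sets])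
  also have "\<dots> \<le> (\<Sum>i. ennreal c * ennreal (hausdorff_weight t (C i)))"
    by (rule suminf_le[OF f_mass summableI summableI])
  also have "\<dots> = ennreal c * (\<Sum>i. ennreal (hausdorff_weight t (C i)))" by simp
  finally show ?thesis by (simp add: c_def)
qed

lemma hausdorff_measure_pos_of_upper_mass_bound:
  fixes \<mu> :: "'a::metric_space measure"
  assumes sets: "sets \<mu> = sets borel"
    and upper: "\<And>z e. z \<in> K \<Longrightarrow> 0 < e \<Longrightarrow> e \<le> R0 \<Longrightarrow> emeasure \<mu> (ball z e) \<le> ennreal (\<beta> * e powr s)"
    and \<beta>: "0 < \<beta>" and R0: "0 < R0" and K: "0 < emeasure \<mu> K" and t: "0 \<le> t" "t < s"
  shows "0 < hausdorff_measure t K"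
proof -
  define \<delta> where "\<delta> = min 1 (R0 / 2)"
  define c where "c = \<beta> * 2 powr s"
  have \<delta>: "0 < \<delta>" using R0 by (simp add: \<delta>_def)
  have c: "0 < c" using \<beta> by (simp add: c_def)
  have "emeasure \<mu> K * ennreal (1 / c) \<le> hausdorff_pre t \<delta> K"
    unfolding hausdorff_pre_eq
  proof (rule INF_greatest)
    fix C :: "nat \<Rightarrow> 'a set"
    assume "C \<in> {C. K \<subseteq> (\<Union>i. C i) \<and> (\<forall>i. bounded (C i) \<and> diameter (C i) \<le> \<delta>)}"
    hence "emeasure \<mu> K \<le> ennreal c * (\<Sum>i. ennreal (hausdorff_weight t (C i)))"
      unfolding c_def \<delta>_def by (intro mass_le_hausdorff_weights[OF sets upper \<beta> R0 t]) auto
    hence "emeasure \<mu> K * ennreal (1 / c)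
        \<le> ennreal c * (\<Sum>i. ennreal (hausdorff_weight t (C i))) * ennreal (1 / c)"
      by (rule mult_right_mono) simp
    also have "\<dots> = (ennreal c * ennreal (1 / c)) * (\<Sum>i. ennreal (hausdorff_weight t (C i)))"
      by (simp only: ac_simps)
    also have "ennreal c * ennreal (1 / c) = 1" using c by (simp add: ennreal_mult[symmetric])
    finally show "emeasure \<mu> K * ennreal (1 / c) \<le> (\<Sum>i. ennreal (hausdorff_weight t (C i)))"
      by simp
  qed
  also have "\<dots> \<le> hausdorff_measure t K"
    unfolding hausdorff_measure_def using \<delta> by (intro SUP_upper) simp
  finally have lower: "emeasure \<mu> K * ennreal (1 / c) \<le> hausdorff_measure t K" .
  have "0 < emeasure \<mu> K * ennreal (1 / c)" using K c by (simp add: ennreal_zero_less_mult_iff)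
  thus ?thesis using lower by (rule order.strict_trans2)
qed

lemma hausdorff_dim_eqI:
  assumes s: "0 \<le> s" and zero: "\<And>t. s < t \<Longrightarrow> hausdorff_measure t A = 0"
    and pos: "\<And>t. 0 \<le> t \<Longrightarrow> t < s \<Longrightarrow> hausdorff_measure t A \<noteq> 0"
  shows "hausdorff_dim A = ereal s"
proof -
  define S where "S = {ereal t | t. t \<ge> 0 \<and> hausdorff_measure t A = 0}"
  have "ereal s \<le> y" if "y \<in> S" for y
    using that pos by (force simp: S_def not_less[symmetric])
  hence "ereal s \<le> Inf S" by (rule Inf_greatest)
  moreover have "Inf S \<le> ereal s + ereal e" if "0 < e" for e :: real
  proof -
    have "ereal (s + e) \<in> S" unfolding S_def using zero[of "s + e"] that s by auto
    hence "Inf S \<le> ereal (s + e)" by (rule Inf_lower)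
    thus ?thesis by simp
  qed
  hence "Inf S \<le> ereal s" by (rule ereal_le_epsilon2)
  ultimately show ?thesis unfolding hausdorff_dim_def S_def[symmetric] by simp
qed

lemma upper_minkowski_dim_eqI:
  assumes c: "0 < c1" "0 < c2"
    and bounds: "\<forall>\<^sub>F \<delta> in at_right 0. c1 / \<delta> powr s \<le> real (covering_number A \<delta>) \<and>
        real (covering_number A \<delta>) \<le> c2 / \<delta> powr s"
  shows "upper_minkowski_dim A = ereal s"
proof -
  define f where "f \<delta> = ln (real (covering_number A \<delta>)) / - ln \<delta>" for \<delta> :: real
  have sandwich: "ln c1 / - ln \<delta> + s \<le> f \<delta> \<and> f \<delta> \<le> ln c2 / - ln \<delta> + s"
    if \<delta>: "0 < \<delta>" "\<delta> < 1" and N: "c1 / \<delta> powr s \<le> real (covering_number A \<delta>)"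
      "real (covering_number A \<delta>) \<le> c2 / \<delta> powr s" for \<delta>
  proof -
    define L where "L = - ln \<delta>"
    have L: "0 < L" using \<delta> by (simp add: L_def)
    have ln_bound: "ln (c / \<delta> powr s) = ln c + s * L" if "0 < c" for c
      using that \<delta> by (simp add: ln_div L_def)
    have pos: "0 < c1 / \<delta> powr s" using c \<delta> by simp
    have "ln c1 + s * L \<le> ln (real (covering_number A \<delta>))"
      using N(1) pos ln_bound[OF c(1)] by (metis ln_le_cancel_iff order.strict_trans2)
    moreover have "ln (real (covering_number A \<delta>)) \<le> ln c2 + s * L"
      using N pos ln_bound[OF c(2)] by (metis ln_le_cancel_iff order.strict_trans2)
    moreover have "ln c1 / L + s = (ln c1 + s * L) / L" "ln c2 / L + s = (ln c2 + s * L) / L"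
      using L by (simp_all add: field_simps)
    ultimately show ?thesis using L by (simp add: f_def L_def[symmetric] divide_right_mono)
  qed
  have to_s: "((\<lambda>\<delta>. ln c / - ln \<delta> + s) \<longlongrightarrow> s) (at_right 0)" for c
  proof -
    have "filterlim (\<lambda>\<delta>::real. - ln \<delta>) at_infinity (at_right 0)"
      using filterlim_uminus_at_bot[THEN iffD1, OF ln_at_0]
        by (rule filterlim_at_top_imp_at_infinity)
    hence "((\<lambda>\<delta>. ln c / - ln \<delta> + s) \<longlongrightarrow> 0 + s) (at_right 0)"
      by (intro tendsto_add tendsto_divide_0[OF tendsto_const] tendsto_const)
    thus ?thesis by simp
  qed
  have ev: "\<forall>\<^sub>F \<delta> in at_right 0. ln c1 / - ln \<delta> + s \<le> f \<delta> \<and> f \<delta> \<le> ln c2 / - ln \<delta> + s"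
    using bounds eventually_at_right_real[OF zero_less_one]
    by eventually_elim (use sandwich in auto)
  have "(f \<longlongrightarrow> s) (at_right 0)"
    by (rule tendsto_sandwich[OF _ _ to_s to_s]) (use ev in \<open>auto elim: eventually_mono\<close>)
  hence "((\<lambda>\<delta>. ereal (f \<delta>)) \<longlongrightarrow> ereal s) (at_right 0)" by (rule tendsto_ereal)
  hence "Limsup (at_right 0) (\<lambda>\<delta>. ereal (f \<delta>)) = ereal s" by (intro lim_imp_Limsup) simp_all
  thus ?thesis unfolding upper_minkowski_dim_def f_def by simp
qed

lemma s_regularE:
  fixes K :: "'a::metric_space set"
  assumes "s_regular s K"
  obtains \<mu> :: "'a measure" and \<alpha> \<beta> R0 where "sets \<mu> = sets borel"
    "0 < \<alpha>" "0 < \<beta>" "0 < R0" "0 < emeasure \<mu> K" "emeasure \<mu> (space \<mu>) < \<infinity>"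
    "\<And>z e. z \<in> K \<Longrightarrow> 0 < e \<Longrightarrow> e \<le> R0 \<Longrightarrow> ennreal (\<alpha> * e powr s) \<le> emeasure \<mu> (ball z e)"
    "\<And>z e. z \<in> K \<Longrightarrow> 0 < e \<Longrightarrow> e \<le> R0 \<Longrightarrow> emeasure \<mu> (ball z e) \<le> ennreal (\<beta> * e powr s)"
proof -
  obtain \<mu> :: "'a measure" and \<alpha> \<beta> R0 where
    sets: "sets \<mu> = sets borel" and pos: "0 < \<alpha>" "0 < \<beta>" "0 < R0"
    and K: "0 < emeasure \<mu> K" and fin: "emeasure \<mu> (space \<mu>) < \<infinity>"
    and mass: "\<And>z e. z \<in> K \<Longrightarrow> 0 < e \<Longrightarrow> e \<le> R0 \<Longrightarrow>
      ennreal (\<alpha> * e powr s) < emeasure \<mu> (ball z e) \<and> emeasure \<mu> (ball z e) <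
          ennreal (\<beta> * e powr s)"
    using assms unfolding s_regular_def by blast
  have lower: "ennreal (\<alpha> * e powr s) \<le> emeasure \<mu> (ball z e)"
    and upper: "emeasure \<mu> (ball z e) \<le> ennreal (\<beta> * e powr s)"
    if "z \<in> K" "0 < e" "e \<le> R0" for z e
    using mass[OF that] by auto
  show thesis by (rule that[OF sets pos K fin lower upper])
qed

lemma s_regular_small_covers:
  fixes K :: "'a::metric_space set"
  assumes "s_regular s K"
  obtains c R where "0 \<le> c" "0 < R"
    "\<And>\<delta>. 0 < \<delta> \<Longrightarrow> \<delta> \<le> R \<Longrightarrow> \<exists>F. finite_delta_cover \<delta> K F \<and> real (card F) \<le> c / \<delta> powr s"
proof -
  obtain \<mu> :: "'a measure" and \<alpha> \<beta> R0 where sets: "sets \<mu> = sets borel" and pos: "0 < \<alpha>" "0 < R0"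
    and fin: "emeasure \<mu> (space \<mu>) < \<infinity>"
    and lower: "\<And>z e. z \<in> K \<Longrightarrow> 0 < e \<Longrightarrow> e \<le> R0 \<Longrightarrow> ennreal (\<alpha> * e powr s) \<le> emeasure \<mu> (ball z e)"
    by (rule s_regularE[OF assms], rule that) assumption+
  define c where "c = measure \<mu> (space \<mu>) * 4 powr s / \<alpha>"
  have covers: "\<exists>F. finite_delta_cover \<delta> K F \<and> real (card F) \<le> c / \<delta> powr s"
    if \<delta>: "0 < \<delta>" "\<delta> \<le> 4 * R0" for \<delta>
  proof -
    obtain F where "finite_delta_cover \<delta> K F"
      "real (card F) \<le> measure \<mu> (space \<mu>) * 4 powr s / \<alpha> / \<delta> powr s"
      by (rule small_covers_of_lower_mass_bound[OF sets fin pos(1) lower \<delta>])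
    thus ?thesis by (auto simp: c_def)
  qed
  show thesis by (rule that[of c "4 * R0", OF _ _ covers]) (use pos in \<open>auto simp: c_def\<close>)
qed

lemma s_regular_hausdorff_dim:
  fixes K :: "'a::metric_space set"
  assumes reg: "s_regular s K" and s: "0 \<le> s"
  shows "hausdorff_dim K = ereal s"
proof -
  obtain \<mu> :: "'a measure" and \<alpha> \<beta> R0 where sets: "sets \<mu> = sets borel"
    and pos: "0 < \<beta>" "0 < R0" and K: "0 < emeasure \<mu> K"
    and upper: "\<And>z e. z \<in> K \<Longrightarrow> 0 < e \<Longrightarrow> e \<le> R0 \<Longrightarrow> emeasure \<mu> (ball z e) \<le> ennreal (\<beta> * e powr s)"
    by (rule s_regularE[OF reg], rule that) assumption+
  obtain c R where c: "0 \<le> c" "0 < R"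
    and covers: "\<And>\<delta>. 0 < \<delta> \<Longrightarrow> \<delta> \<le> R \<Longrightarrow> \<exists>F. finite_delta_cover \<delta> K F \<and> real (card F) \<le> c / \<delta> powr s"
    by (rule s_regular_small_covers[OF reg], rule that) assumption+
  have zero: "hausdorff_measure t K = 0" if "s < t" for t
    by (rule hausdorff_measure_eq_0_if_small_covers[OF s that c covers])
  have nonzero: "hausdorff_measure t K \<noteq> 0" if "0 \<le> t" "t < s" for t
    using hausdorff_measure_pos_of_upper_mass_bound[OF sets upper pos K that] by simp
  show ?thesis by (rule hausdorff_dim_eqI[OF s zero nonzero])
qed

lemma s_regular_upper_minkowski_dim:
  fixes K :: "'a::metric_space set"
  assumes reg: "s_regular s K"
  shows "upper_minkowski_dim K = ereal s"
proof -
  obtain \<mu> :: "'a measure" and \<alpha> \<beta> R0 where sets: "sets \<mu> = sets borel"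
    and pos: "0 < \<beta>" "0 < R0" and K: "0 < emeasure \<mu> K" and fin: "emeasure \<mu> (space \<mu>) < \<infinity>"
    and upper: "\<And>z e. z \<in> K \<Longrightarrow> 0 < e \<Longrightarrow> e \<le> R0 \<Longrightarrow> emeasure \<mu> (ball z e) \<le> ennreal (\<beta> * e powr s)"
    by (rule s_regularE[OF reg], rule that) assumption+
  obtain c R where c: "0 \<le> c" "0 < R"
    and covers: "\<And>\<delta>. 0 < \<delta> \<Longrightarrow> \<delta> \<le> R \<Longrightarrow> \<exists>F. finite_delta_cover \<delta> K F \<and> real (card F) \<le> c / \<delta> powr s"
    by (rule s_regular_small_covers[OF reg], rule that) assumption+
  have "emeasure \<mu> K \<le> emeasure \<mu> (space \<mu>)" by (rule emeasure_space)
  hence mK: "emeasure \<mu> K = ennreal (measure \<mu> K)" using fin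
    by (intro emeasure_eq_ennreal_measure) auto
  define c1 where "c1 = measure \<mu> K / (\<beta> * 2 powr s)"
  have c1: "0 < c1" using K pos by (simp add: c1_def mK)
  have bounds: "c1 / \<delta> powr s \<le> real (covering_number K \<delta>) \<and>
      real (covering_number K \<delta>) \<le> (c + 1) / \<delta> powr s"
    if \<delta>: "0 < \<delta>" "\<delta> < min R (R0 / 2)" for \<delta>
  proof
    have \<delta>': "\<delta> \<le> R" "2 * \<delta> \<le> R0" using \<delta> by auto
    obtain F where F: "finite_delta_cover \<delta> K F" "real (card F) \<le> c / \<delta> powr s"
      using covers[OF \<delta>(1) \<delta>'(1)] by blast
    have "real (covering_number K \<delta>) \<le> c / \<delta> powr s"
      using covering_number_le_card[OF F(1)] F(2) by linarith
    also have "\<dots> \<le> (c + 1) / \<delta> powr s" using \<delta> by (simp add: divide_right_mono)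
    finally show "real (covering_number K \<delta>) \<le> (c + 1) / \<delta> powr s" .
    obtain F' where F': "finite_delta_cover \<delta> K F'" "card F' = covering_number K \<delta>"
      by (rule covering_number_attained[OF F(1)])
    have "ennreal (measure \<mu> K) \<le> ennreal (real (card F') * (\<beta> * 2 powr s * \<delta> powr s))"
      using mass_le_card_cover[OF sets upper _ pos(2) F'(1) \<delta>(1) \<delta>'(2)] pos by (simp add: mK)
    hence "measure \<mu> K \<le> real (covering_number K \<delta>) * (\<beta> * 2 powr s * \<delta> powr s)"
      using pos \<delta> by (simp add: F'(2) ennreal_le_iff)
    thus "c1 / \<delta> powr s \<le> real (covering_number K \<delta>)"
      using pos \<delta> by (simp add: c1_def divide_le_eq mult.assoc)
  qed
  have "\<forall>\<^sub>F \<delta> in at_right 0. \<delta> \<in> {0<..<min R (R0 / 2)}"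
    by (rule eventually_at_right_real) (use pos c in simp)
  hence "\<forall>\<^sub>F \<delta> in at_right 0. c1 / \<delta> powr s \<le> real (covering_number K \<delta>) \<and>
      real (covering_number K \<delta>) \<le> (c + 1) / \<delta> powr s"
    by (rule eventually_mono) (use bounds in simp)
  thus ?thesis using c by (intro upper_minkowski_dim_eqI[OF c1]) auto
qed

lemma doubling_space_iterate:
  assumes "doubling_space TYPE('a::metric_space)"
  obtains M :: nat where "\<And>(z::'a) R k. 0 < R \<Longrightarrow>
    \<exists>F. finite F \<and> card F \<le> M ^ k \<and> ball z R \<subseteq> (\<Union>y\<in>F. ball y (R / 2 ^ k))"
proof -
  obtain M :: nat where M: "\<And>(z::'a) R. 0 < R \<Longrightarrow>
      \<exists>F. finite F \<and> card F \<le> M \<and> ball z R \<subseteq> (\<Union>y\<in>F. ball y (R / 2))"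
    using assms unfolding doubling_space_def by blast
  have "\<exists>F. finite F \<and> card F \<le> M ^ k \<and> ball z R \<subseteq> (\<Union>y\<in>F. ball y (R / 2 ^ k))"
    if R: "0 < R" for z :: 'a and R k
  proof (induction k)
    case 0
    show ?case by (intro exI[of _ "{z}"]) simp
  next
    case (Suc k)
    then obtain F where F: "finite F" "card F \<le> M ^ k" "ball z R \<subseteq> (\<Union>y\<in>F. ball y (R / 2 ^ k))"
      by blast
    have "\<forall>y::'a. \<exists>G. finite G \<and> card G \<le> M \<and> ball y (R / 2 ^ k) \<subseteq> (\<Union>u\<in>G. ball u (R / 2 ^ k / 2))"
    proof
      fix y :: 'a
      show "\<exists>G. finite G \<and> card G \<le> M \<and> ball y (R / 2 ^ k) \<subseteq> (\<Union>u\<in>G. ball u (R / 2 ^ k / 2))"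
        by (rule M) (use R in simp)
    qed
    from choice[OF this] obtain G where "\<forall>y::'a. finite (G y) \<and> card (G y) \<le> M \<and>
        ball y (R / 2 ^ k) \<subseteq> (\<Union>u\<in>G y. ball u (R / 2 ^ k / 2))"
      by blast
    hence G: "\<And>y. finite (G y)" "\<And>y. card (G y) \<le> M"
      "\<And>y. ball y (R / 2 ^ k) \<subseteq> (\<Union>u\<in>G y. ball u (R / 2 ^ k / 2))"
      by auto
    have "card (\<Union>y\<in>F. G y) \<le> (\<Sum>y\<in>F. card (G y))" by (rule card_UN_le[OF F(1)])
    also have "\<dots> \<le> card F * M" using sum_mono[of F "\<lambda>y. card (G y)" "\<lambda>_. M"] G(2) by simp
    also have "\<dots> \<le> M ^ Suc k" using mult_le_mono1[OF F(2), of M] by (simp add: mult.commute)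
    finally have "card (\<Union>y\<in>F. G y) \<le> M ^ Suc k" .
    moreover have "ball z R \<subseteq> (\<Union>u\<in>(\<Union>y\<in>F. G y). ball u (R / 2 ^ k / 2))"
      using F(3) G(3) by blast
    moreover have "R / 2 ^ k / 2 = R / 2 ^ Suc k" by simp
    ultimately show ?case using F(1) G(1) by (metis finite_UN_I)
  qed
  thus ?thesis by (rule that)
qed

section \<open>Words and \<open>s\<close>-trees\<close>

lemma word_prefix_Suc: "word_prefix w (Suc n) = word_prefix w n @ [w n]"
  by (simp add: word_prefix_def)

lemma length_word_prefix[simp]: "length (word_prefix w n) = n"
  by (simp add: word_prefix_def)

lemma word_prefix_nth: "k < n \<Longrightarrow> word_prefix w n ! k = w k"
  by (simp add: word_prefix_def)

lemma take_word_prefix: "k \<le> n \<Longrightarrow> take k (word_prefix w n) = word_prefix w k"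
  by (simp add: word_prefix_def take_map)

lemma LIMSEQ_word_coordinatewise:
  fixes v :: "nat \<Rightarrow> nat \<Rightarrow> nat"
  assumes "\<And>i. \<forall>\<^sub>F n in sequentially. v n i = w i"
  shows "v \<longlonglongrightarrow> w"
proof -
  have "limitin (product_topology (\<lambda>_. euclidean) UNIV) v w sequentially"
    unfolding limitin_componentwise
  proof (intro conjI ballI)
    fix i :: nat
    show "limitin euclidean (\<lambda>n. v n i) (w i) sequentially"
      using assms[of i] by (simp add: tendsto_discrete)
  qed auto
  thus ?thesis by (simp add: euclidean_product_topology)
qed

lemma not_incomparable_prefix:
  assumes "\<not> incomparable I J" "length I \<le> length J"
  shows "I = take (length I) J"
  using assms unfolding incomparable_def
  by (intro nth_equalityI) auto

locale s_tree_structure =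
  fixes N :: nat and s :: real and T :: "(nat \<Rightarrow> nat) set"
    and x :: "nat list \<Rightarrow> 'a::complete_space" and r :: "nat list \<Rightarrow> real"
    and \<rho> C D :: real
  assumes N_ge_2: "N \<ge> 2" and s_nonneg: "s \<ge> 0"
    and T_nonempty: "T \<noteq> {}" and T_subset: "T \<subseteq> Sigma_N N"
    and r_pos: "\<And>I. I \<in> Tstar T \<Longrightarrow> 0 < r I"
    and rho_pos: "0 < \<rho>" and C_pos: "0 < C" and D_pos: "0 < D"
    and T1: "\<And>I J. I \<in> Tstar T \<Longrightarrow> J \<in> Tstar T \<Longrightarrow> incomparable I J \<Longrightarrow>
        dist (x I) (x J) \<ge> C * (r I + r J)"
    and T2_bounded: "\<And>I. I \<in> Tstar T \<Longrightarrow> bounded {x (I @ J) | J. I @ J \<in> Tstar T}"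
    and T2_diameter: "\<And>I. I \<in> Tstar T \<Longrightarrow> diameter {x (I @ J) | J. I @ J \<in> Tstar T} \<le> D * r I"
    and T3: "\<And>I n. I \<in> Tstar T \<Longrightarrow> (\<Sum>J \<in> {J. length J = n \<and> I @ J \<in> Tstar T}. r (I @ J) powr s) =
        r I powr s"
    and T4: "\<And>\<epsilon>. \<epsilon> > 0 \<Longrightarrow> \<exists>m. \<forall>I \<in> Tstar T. length I \<ge> m \<longrightarrow> r I < \<epsilon>"
    and T5: "\<And>I j. j < N \<Longrightarrow> I @ [j] \<in> Tstar T \<Longrightarrow> r (I @ [j]) \<ge> \<rho> * r I"
    and T_closed: "closedin (top_of_set (Sigma_N N)) T"
begin

lemma Tstar_iff: "I \<in> Tstar T \<longleftrightarrow> (\<exists>w\<in>T. I = word_prefix w (length I))"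
  unfolding Tstar_def by auto

lemma prefix_in_Tstar: "w \<in> T \<Longrightarrow> word_prefix w n \<in> Tstar T"
  unfolding Tstar_def by auto

lemma Tstar_appendD: "I @ J \<in> Tstar T \<Longrightarrow> I \<in> Tstar T"
proof -
  assume "I @ J \<in> Tstar T"
  then obtain w where w: "w \<in> T" "I @ J = word_prefix w (length (I @ J))" using Tstar_iff by blast
  have "I = take (length I) (I @ J)" by simp
  also have "\<dots> = word_prefix w (length I)" using w by (simp add: take_word_prefix)
  finally show ?thesis using w prefix_in_Tstar by metis
qed

lemma Nil_in_Tstar: "[] \<in> Tstar T"
  using T_nonempty prefix_in_Tstar[of _ 0] by (auto simp: word_prefix_def)

lemma Tstar_letters: "I \<in> Tstar T \<Longrightarrow> set I \<subseteq> {..<N}"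
  using T_subset unfolding Tstar_def Sigma_N_def word_prefix_def by fastforce

lemma finite_Tstar_length_le: "finite {J \<in> Tstar T. length J \<le> m}"
proof -
  have "{J \<in> Tstar T. length J \<le> m} \<subseteq> {J. set J \<subseteq> {..<N} \<and> length J \<le> m}"
    using Tstar_letters by fastforce
  thus ?thesis by (rule finite_subset) (simp add: finite_lists_length_le)
qed

definition children :: "nat list \<Rightarrow> nat set" where "children I = {j. I @ [j] \<in> Tstar T}"

lemma children_less: "j \<in> children I \<Longrightarrow> j < N"
  unfolding children_def using Tstar_letters by fastforce

definition mass :: "nat list \<Rightarrow> real" where "mass I = r I powr s"

lemma mass_pos: "I \<in> Tstar T \<Longrightarrow> 0 < mass I" using r_pos[of I] by (simp add: mass_def)
lemma mass_nonneg: "0 \<le> mass I" by (simp add: mass_def)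

lemma children_mass_sum: "I \<in> Tstar T \<Longrightarrow> (\<Sum>j\<in>children I. mass (I @ [j])) = mass I"
proof -
  assume I: "I \<in> Tstar T"
  have e: "{J. length J = 1 \<and> I @ J \<in> Tstar T} = (\<lambda>j. [j]) ` children I"
    by (auto simp: children_def length_Suc_conv)
  have "(\<Sum>j\<in>children I. mass (I @ [j])) = (\<Sum>J\<in>(\<lambda>j. [j]) ` children I. r (I @ J) powr s)"
    by (subst sum.reindex) (auto simp: inj_on_def mass_def)
  also have "\<dots> = mass I" using T3[OF I, of 1] e by (simp add: mass_def)
  finally show ?thesis .
qed

lemma finite_children: "finite (children I)"
  using children_less by (meson finite_nat_set_iff_bounded)

text \<open>\<open>left_end I\<close> adds up the masses of the siblings preceding the successive prefixes of
  \<open>I\<close>, so that by (T3) the code interval of \<open>I\<close> is tiled by those of its children, ordered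
  by their last letter.\<close>

definition left_end :: "nat list \<Rightarrow> real" where
  "left_end I = (\<Sum>k<length I. \<Sum>i\<in>{i\<in>children (take k I). i < I ! k}. mass (take k I @ [i]))"

definition child_left_end :: "nat list \<Rightarrow> nat \<Rightarrow> real" where
  "child_left_end I j = left_end I + (\<Sum>i\<in>{i\<in>children I. i < j}. mass (I @ [i]))"

lemma left_end_Nil[simp]: "left_end [] = 0" by (simp add: left_end_def)

lemma left_end_snoc: "left_end (I @ [j]) = child_left_end I j"
proof -
  let ?J = "I @ [j]"
  let ?term = "\<lambda>k. \<Sum>i\<in>{i\<in>children (take k ?J). i < ?J ! k}. mass (take k ?J @ [i])"
  have "left_end ?J = (\<Sum>k<length I. ?term k) + ?term (length I)"
    by (simp add: left_end_def)
  also have "(\<Sum>k<length I. ?term k) = left_end I"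
    unfolding left_end_def by (intro sum.cong) (auto simp: nth_append)
  also have "?term (length I) = (\<Sum>i\<in>{i\<in>children I. i < j}. mass (I @ [i]))" by simp
  finally show ?thesis by (simp add: child_left_end_def)
qed

definition code_interval :: "nat list \<Rightarrow> real set" where
  "code_interval I = {left_end I ..< left_end I + mass I}"

lemma child_left_end_mono: "j \<le> j' \<Longrightarrow> child_left_end I j \<le> child_left_end I j'"
  unfolding child_left_end_def
    by (intro add_left_mono sum_mono2)
        (auto intro: finite_subset[OF _ finite_children] simp: mass_nonneg)

lemma child_left_end_Suc: "child_left_end I (Suc j) = child_left_end I j +
    (if j \<in> children I then mass (I @ [j]) else 0)"
proof (cases "j \<in> children I")
  case True
  have e: "{i\<in>children I. i < Suc j} = insert j {i\<in>children I. i < j}" using True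
    by (auto simp: less_Suc_eq)
  have f: "finite {i\<in>children I. i < j}" using finite_children[of I] by simp
  show ?thesis unfolding child_left_end_def e using True f by (simp add: sum.insert)
next
  case False
  have e: "{i\<in>children I. i < Suc j} = {i\<in>children I. i < j}" using False
    by (auto simp: less_Suc_eq)
  show ?thesis unfolding child_left_end_def e using False by simp
qed

lemma child_left_end_N: "I \<in> Tstar T \<Longrightarrow> child_left_end I N = left_end I + mass I"
proof -
  assume I: "I \<in> Tstar T"
  have "{i\<in>children I. i < N} = children I" using children_less by auto
  thus ?thesis using children_mass_sum[OF I] by (simp add: child_left_end_def)
qed

lemma child_left_end_le: "I \<in> Tstar T \<Longrightarrow> child_left_end I j \<le> left_end I + mass I"
proof -
  assume I: "I \<in> Tstar T"
  have "child_left_end I j \<le> child_left_end I (max j N)" by (rule child_left_end_mono) simp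
  also have "\<dots> = child_left_end I N"
  proof -
    have "{i\<in>children I. i < max j N} = {i\<in>children I. i < N}" using children_less
      by (auto simp: less_max_iff_disj)
    thus ?thesis by (simp add: child_left_end_def)
  qed
  finally show ?thesis using child_left_end_N[OF I] by simp
qed

lemma code_interval_child_subset: "I \<in> Tstar T \<Longrightarrow> j \<in> children I \<Longrightarrow> code_interval (I @ [j]) \<subseteq>
    code_interval I"
proof -
  assume I: "I \<in> Tstar T" and j: "j \<in> children I"
  have 1: "left_end I \<le> left_end (I @ [j])" using child_left_end_mono[of 0 j I]
    by (simp add: left_end_snoc child_left_end_def)
  have "left_end (I @ [j]) + mass (I @ [j]) = child_left_end I (Suc j)" using j
    by (simp add: left_end_snoc child_left_end_Suc)
  also have "\<dots> \<le> left_end I + mass I" by (rule child_left_end_le[OF I])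
  finally show ?thesis using 1 by (auto simp: code_interval_def)
qed

lemma code_interval_children_disjoint: "j < j' \<Longrightarrow> j \<in> children I \<Longrightarrow>
    code_interval (I @ [j]) \<inter> code_interval (I @ [j']) = {}"
proof -
  assume jj: "j < j'" and j: "j \<in> children I"
  have "left_end (I @ [j]) + mass (I @ [j]) = child_left_end I (Suc j)" using j
    by (simp add: left_end_snoc child_left_end_Suc)
  also have "\<dots> \<le> child_left_end I j'" using jj by (intro child_left_end_mono) simp
  finally show ?thesis by (auto simp: code_interval_def left_end_snoc)
qed

lemma code_interval_children_cover: "I \<in> Tstar T \<Longrightarrow> t \<in> code_interval I \<Longrightarrow>
    \<exists>j\<in>children I. t \<in> code_interval (I @ [j])"
proof -
  assume I: "I \<in> Tstar T" and t: "t \<in> code_interval I"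
  have ex: "t < child_left_end I (Suc (N - 1))" using t child_left_end_N[OF I] N_ge_2
    by (auto simp: code_interval_def)
  define j where "j = (LEAST j. t < child_left_end I (Suc j))"
  have j1: "t < child_left_end I (Suc j)" unfolding j_def
    by (rule LeastI[of "\<lambda>j. t < child_left_end I (Suc j)" "N - 1", OF ex])
  have j0: "child_left_end I j \<le> t"
  proof (cases j)
    case 0 thus ?thesis using t by (simp add: child_left_end_def code_interval_def)
  next
    case (Suc k)
    have "k < j" using Suc by simp
    hence "\<not> t < child_left_end I (Suc k)" unfolding j_def by (rule not_less_Least)
    thus ?thesis using Suc by simp
  qed
  have jc: "j \<in> children I"
  proof (rule ccontr)
    assume "j \<notin> children I" hence "child_left_end I (Suc j) = child_left_end I j"
      by (simp add: child_left_end_Suc)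
    thus False using j0 j1 by simp
  qed
  have "child_left_end I (Suc j) = left_end (I @ [j]) + mass (I @ [j])" using jc
    by (simp add: child_left_end_Suc left_end_snoc)
  hence "t \<in> code_interval (I @ [j])" using j0 j1 by (simp add: code_interval_def left_end_snoc)
  thus ?thesis using jc by blast
qed

lemma code_interval_descendant_subset: "I @ J \<in> Tstar T \<Longrightarrow> code_interval (I @ J) \<subseteq> code_interval I"
proof (induction J rule: rev_induct)
  case Nil thus ?case by simp
next
  case (snoc j J)
  have IJ: "I @ J \<in> Tstar T" using snoc.prems Tstar_appendD[of "I @ J" "[j]"] by simp
  have "j \<in> children (I @ J)" using snoc.prems by (simp add: children_def)
  hence "code_interval (I @ J @ [j]) \<subseteq> code_interval (I @ J)"
    using code_interval_child_subset[OF IJ] by simp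
  thus ?case using snoc.IH[OF IJ] by simp
qed

lemma code_interval_incomparable_disjoint:
  assumes I: "I \<in> Tstar T" and J: "J \<in> Tstar T" and inc: "incomparable I J"
  shows "code_interval I \<inter> code_interval J = {}"
proof -
  define k where "k = (LEAST k. k < min (length I) (length J) \<and> I ! k \<noteq> J ! k)"
  have k: "k < min (length I) (length J) \<and> I ! k \<noteq> J ! k"
    unfolding k_def using inc unfolding incomparable_def by (metis (mono_tags, lifting) LeastI)
  have pre: "take k I = take k J"
  proof (rule nth_equalityI)
    show "length (take k I) = length (take k J)" using k by simp
    fix i assume "i < length (take k I)"
    hence "i < k" by simp
    hence "\<not> (i < min (length I) (length J) \<and> I ! i \<noteq> J ! i)" unfolding k_def
      by (rule not_less_Least)
    thus "take k I ! i = take k J ! i" using \<open>i < k\<close> k by auto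
  qed
  define P where "P = take k I"
  have dI: "I = P @ [I ! k] @ drop (Suc k) I" unfolding P_def using k
    by (simp add: Cons_nth_drop_Suc)
  have dJ: "J = P @ [J ! k] @ drop (Suc k) J" unfolding P_def pre using k
    by (simp add: Cons_nth_drop_Suc)
  have s1: "code_interval I \<subseteq> code_interval (P @ [I ! k])"
    using code_interval_descendant_subset[of "P @ [I!k]" "drop (Suc k) I"] I dI by simp
  have s2: "code_interval J \<subseteq> code_interval (P @ [J ! k])"
    using code_interval_descendant_subset[of "P @ [J!k]" "drop (Suc k) J"] J dJ by simp
  have cI: "I ! k \<in> children P" using I dI Tstar_appendD[of "P @ [I!k]"]
    by (simp add: children_def) (metis append.assoc)
  have cJ: "J ! k \<in> children P" using J dJ Tstar_appendD[of "P @ [J!k]"]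
    by (simp add: children_def) (metis append.assoc)
  have "code_interval (P @ [I ! k]) \<inter> code_interval (P @ [J ! k]) = {}"
  proof (cases "I ! k < J ! k")
    case True thus ?thesis using code_interval_children_disjoint cI by blast
  next
    case False hence "J ! k < I ! k" using k by simp
    thus ?thesis using code_interval_children_disjoint cJ by blast
  qed
  thus ?thesis using s1 s2 by blast
qed

definition descendants :: "nat list \<Rightarrow> 'a set" where
  "descendants I = {x (I @ J) | J. I @ J \<in> Tstar T}"

lemma bounded_descendants: "I \<in> Tstar T \<Longrightarrow> bounded (descendants I)" unfolding descendants_def
  by (rule T2_bounded)
lemma diameter_descendants: "I \<in> Tstar T \<Longrightarrow> diameter (descendants I) \<le> D * r I"
  unfolding descendants_def by (rule T2_diameter)

lemma dist_descendants: "I \<in> Tstar T \<Longrightarrow> p \<in> descendants I \<Longrightarrow> q \<in> descendants I \<Longrightarrow> dist p q \<le> D * r I"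
  using diameter_bounded_bound[OF bounded_descendants, of I p q] diameter_descendants[of I]
    by linarith

lemma prefix_in_descendants: "w \<in> T \<Longrightarrow> n \<le> k \<Longrightarrow> x (word_prefix w k) \<in> descendants (word_prefix w n)"
proof -
  assume w: "w \<in> T" and nk: "n \<le> k"
  have "word_prefix w k = word_prefix w n @ drop n (word_prefix w k)"
    using take_word_prefix[OF nk, of w] by (metis append_take_drop_id)
  hence "x (word_prefix w k) = x (word_prefix w n @ drop n (word_prefix w k)) \<and>
      word_prefix w n @ drop n (word_prefix w k) \<in> Tstar T"
    using prefix_in_Tstar[OF w, of k] by simp
  thus ?thesis unfolding descendants_def by blast
qed

lemma dist_prefix_points: "w \<in> T \<Longrightarrow> n \<le> k \<Longrightarrow> dist (x (word_prefix w n)) (x (word_prefix w k)) \<le>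
    D * r (word_prefix w n)"
  by (rule dist_descendants[OF prefix_in_Tstar
      prefix_in_descendants[OF _ order_refl] prefix_in_descendants])

lemma scaled_radius_small: "e > 0 \<Longrightarrow> \<exists>M. \<forall>I\<in>Tstar T. length I \<ge> M \<longrightarrow> D * r I < e"
proof -
  assume e: "e > 0"
  obtain M where "\<forall>I\<in>Tstar T. length I \<ge> M \<longrightarrow> r I < e / D" using T4[of "e / D"] e D_pos by auto
  hence "\<forall>I\<in>Tstar T. length I \<ge> M \<longrightarrow> D * r I < e" using D_pos
    by (simp add: pos_less_divide_eq mult.commute)
  thus ?thesis by blast
qed

definition limit_point :: "(nat \<Rightarrow> nat) \<Rightarrow> 'a" where "limit_point w = lim (\<lambda>n. x (word_prefix w n))"

lemma limit_point_LIMSEQ: assumes w: "w \<in> T" shows "(\<lambda>n. x (word_prefix w n)) \<longlonglongrightarrow> limit_point w"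
proof -
  have "Cauchy (\<lambda>n. x (word_prefix w n))"
  proof (rule metric_CauchyI)
    fix e :: real assume e: "0 < e"
    obtain M where M: "\<forall>I\<in>Tstar T. length I \<ge> M \<longrightarrow> D * r I < e / 2"
      using scaled_radius_small[of "e/2"] e by auto
    have dM: "D * r (word_prefix w M) < e / 2" using bspec[OF M prefix_in_Tstar[OF w, of M]] by simp
    have b: "dist (x (word_prefix w M)) (x (word_prefix w k)) < e / 2" if "k \<ge> M" for k
      using dist_prefix_points[OF w that] dM by linarith
    show "\<exists>M. \<forall>m\<ge>M. \<forall>n\<ge>M. dist (x (word_prefix w m)) (x (word_prefix w n)) < e"
    proof (intro exI allI impI)
      fix a b assume "a \<ge> M" "b \<ge> M"
      thus "dist (x (word_prefix w a)) (x (word_prefix w b)) < e"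
        using b[of a] b[of b]
            dist_triangle2[of "x (word_prefix w a)" "x (word_prefix w b)" "x (word_prefix w M)"]
        by (simp add: dist_commute)
    qed
  qed
  hence "convergent (\<lambda>n. x (word_prefix w n))" by (simp add: Cauchy_convergent_iff)
  thus ?thesis unfolding limit_point_def by (simp add: convergent_LIMSEQ_iff)
qed

lemma dist_limit_point: assumes w: "w \<in> T"
  shows "dist (x (word_prefix w n)) (limit_point w) \<le> D * r (word_prefix w n)"
proof (rule LIMSEQ_le_const2)
  show "(\<lambda>k. dist (x (word_prefix w n)) (x (word_prefix w k))) \<longlonglongrightarrow> dist (x (word_prefix w n))
      (limit_point w)"
    by (intro tendsto_intros limit_point_LIMSEQ[OF w])
  show "\<exists>N. \<forall>k\<ge>N. dist (x (word_prefix w n)) (x (word_prefix w k)) \<le> D * r (word_prefix w n)"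
    using dist_prefix_points[OF w] by blast
qed

lemma s_set_eq: "s_set T x = limit_point ` T"
proof (rule set_eqI)
  fix p
  show "p \<in> s_set T x \<longleftrightarrow> p \<in> limit_point ` T"
  proof
    assume "p \<in> s_set T x"
    then obtain v where v: "v \<in> T" "(\<lambda>n. x (word_prefix v n)) \<longlonglongrightarrow> p" by (auto simp: s_set_def)
    have "p = limit_point v" by (rule LIMSEQ_unique[OF v(2) limit_point_LIMSEQ[OF v(1)]])
    thus "p \<in> limit_point ` T" using v(1) by simp
  next
    assume "p \<in> limit_point ` T"
    then obtain v where v: "v \<in> T" "p = limit_point v" by auto
    thus "p \<in> s_set T x" using limit_point_LIMSEQ[OF v(1)] unfolding s_set_def by auto
  qed
qed

lemma Sigma_N_eq_PiE: "Sigma_N N = PiE UNIV (\<lambda>_. {..<N})"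
  by (auto simp: Sigma_N_def PiE_def extensional_def)

lemma compact_T: "compact T"
proof -
  have c: "compact {..<N::nat}" by (rule finite_imp_compact) simp
  have "compactin (product_topology (\<lambda>_. euclidean) UNIV) (PiE UNIV (\<lambda>_::nat. {..<N}))"
    by (simp add: compactin_PiE c)
  hence "compact (Sigma_N N)" by (simp add: Sigma_N_eq_PiE euclidean_product_topology)
  thus ?thesis by (rule closedin_compact[OF _ T_closed])
qed

lemma continuous_on_limit_point: "continuous_on T limit_point"
  unfolding continuous_on_topological
proof (intro ballI allI impI)
  fix w B assume w: "w \<in> T" and B: "open B" "limit_point w \<in> B"
  obtain e where e: "e > 0" "ball (limit_point w) e \<subseteq> B" using B open_contains_ball by blast
  obtain M where M: "\<forall>I\<in>Tstar T. length I \<ge> M \<longrightarrow> D * r I < e / 2"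
    using scaled_radius_small[of "e/2"] e by auto
  have dM: "D * r (word_prefix w M) < e / 2" using bspec[OF M prefix_in_Tstar[OF w, of M]] by simp
  define A where "A = {f. \<forall>i\<in>{..<M}. f ((\<lambda>i. i) i) \<in> {w i}}"
  have "open A" unfolding A_def by (rule product_topology_basis') (simp_all add: open_discrete)
  moreover have "w \<in> A" by (simp add: A_def)
  moreover have "limit_point v \<in> B" if v: "v \<in> T" "v \<in> A" for v
  proof -
    have eq: "word_prefix v M = word_prefix w M" using v(2) by (simp add: A_def word_prefix_def)
    have "dist (limit_point w) (limit_point v) \<le> dist (x (word_prefix w M)) (limit_point w) +
        dist (x (word_prefix w M)) (limit_point v)"
      by (rule dist_triangle3)
    also have "\<dots> < e"
      using dist_limit_point[OF w, of M] dist_limit_point[OF v(1), of M, unfolded eq] dM by linarith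
    finally show ?thesis using e by auto
  qed
  ultimately show "\<exists>A. open A \<and> w \<in> A \<and> (\<forall>y\<in>T. y \<in> A \<longrightarrow> limit_point y \<in> B)" by blast
qed

lemma compact_s_set: "compact (s_set T x)"
  unfolding s_set_eq by (rule compact_continuous_image[OF continuous_on_limit_point compact_T])

section \<open>The natural measure of an \<open>s\<close>-tree\<close>

abbreviation "total_mass \<equiv> mass []"
abbreviation "\<Omega> \<equiv> code_interval []"

text \<open>The code intervals of each level tile the root interval \<open>\<Omega>\<close>, so every \<open>t \<in> \<Omega>\<close> has a
  unique address at every level; outside \<open>\<Omega>\<close> the description is junk, whence the hypothesis
  \<open>t \<in> \<Omega>\<close> below.\<close>

definition child_at :: "nat list \<Rightarrow> real \<Rightarrow> nat" where
  "child_at I t = (THE j. j \<in> children I \<and> t \<in> code_interval (I @ [j]))"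

primrec address :: "real \<Rightarrow> nat \<Rightarrow> nat list" where
  "address t 0 = []"
| "address t (Suc n) = address t n @ [child_at (address t n) t]"

lemma child_at:
  "I \<in> Tstar T \<Longrightarrow> t \<in> code_interval I \<Longrightarrow>
    child_at I t \<in> children I \<and> t \<in> code_interval (I @ [child_at I t])"
proof -
  assume I: "I \<in> Tstar T" and t: "t \<in> code_interval I"
  obtain j where j: "j \<in> children I" "t \<in> code_interval (I @ [j])"
    using code_interval_children_cover[OF I t] by blast
  have u: "j' = j" if "j' \<in> children I" "t \<in> code_interval (I @ [j'])" for j'
  proof (rule ccontr)
    assume "j' \<noteq> j"
    hence "j' < j \<or> j < j'" by auto
    thus False
      using code_interval_children_disjoint[of j' j I] code_interval_children_disjoint[of j j' I]
          j that by blast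
  qed
  have "child_at I t = j" unfolding child_at_def using j u by blast
  thus ?thesis using j by simp
qed

lemma address_spec: "t \<in> \<Omega> \<Longrightarrow> address t n \<in> Tstar T \<and> length (address t n) = n \<and>
    t \<in> code_interval (address t n)"
proof (induction n)
  case 0 thus ?case using Nil_in_Tstar by simp
next
  case (Suc n)
  hence h: "address t n \<in> Tstar T" "length (address t n) = n" "t \<in> code_interval (address t n)"
    by auto
  note c = child_at[OF h(1) h(3)]
  show ?case using c h by (simp add: children_def)
qed

lemma address_eq_iff: assumes t: "t \<in> \<Omega>" and I: "I \<in> Tstar T" "length I = n"
  shows "address t n = I \<longleftrightarrow> t \<in> code_interval I"
proof
  assume "address t n = I" thus "t \<in> code_interval I" using address_spec[OF t, of n] by simp
next
  assume ti: "t \<in> code_interval I"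
  show "address t n = I"
  proof (rule ccontr)
    assume ne: "address t n \<noteq> I"
    have "incomparable (address t n) I"
    proof (rule ccontr)
      assume "\<not> incomparable (address t n) I"
      have l: "length (address t n) = n" using address_spec[OF t, of n] by simp
      have "address t n = take (length (address t n)) I"
        by (rule not_incomparable_prefix[OF \<open>\<not> incomparable (address t n) I\<close>]) (simp add: l I(2))
      thus False using ne l I(2) by simp
    qed
    thus False
      using code_interval_incomparable_disjoint[of "address t n" I] address_spec[OF t, of n] I ti
        by blast
  qed
qed

definition address_word :: "real \<Rightarrow> nat \<Rightarrow> nat" where "address_word t = (\<lambda>k. address t (Suc k) ! k)"

lemma word_prefix_address_word: "t \<in> \<Omega> \<Longrightarrow> word_prefix (address_word t) n = address t n"
proof (induction n)
  case 0 thus ?case by (simp add: word_prefix_def)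
next
  case (Suc n)
  have l: "length (address t n) = n" using address_spec[OF Suc.prems] by simp
  have "address_word t n = child_at (address t n) t"
    unfolding address_word_def using l by (simp add: nth_append)
  thus ?case using Suc by (simp add: word_prefix_Suc)
qed

lemma address_word_in_T: assumes t: "t \<in> \<Omega>" shows "address_word t \<in> T"
proof -
  obtain Cl where Cl: "closed Cl" "T = Sigma_N N \<inter> Cl" using T_closed closedin_closed by blast
  have "\<forall>n. \<exists>v. v \<in> T \<and> word_prefix v n = address t n"
  proof
    fix n show "\<exists>v. v \<in> T \<and> word_prefix v n = address t n"
      using address_spec[OF t, of n] Tstar_iff[of "address t n"] by auto
  qed
  from choice[OF this] obtain v where v: "\<And>n. v n \<in> T" "\<And>n. word_prefix (v n) n = address t n"
    by blast
  have "\<forall>\<^sub>F n in sequentially. v n i = address_word t i" for i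
  proof (rule eventually_sequentiallyI[of "Suc i"])
    fix n assume "Suc i \<le> n"
    have "v n i = word_prefix (v n) n ! i" using \<open>Suc i \<le> n\<close> by (simp add: word_prefix_nth)
    also have "\<dots> = word_prefix (address_word t) n ! i"
      using v(2)[of n] word_prefix_address_word[OF t, of n] by simp
    also have "\<dots> = address_word t i" using \<open>Suc i \<le> n\<close> by (simp add: word_prefix_nth)
    finally show "v n i = address_word t i" .
  qed
  hence lim: "v \<longlonglongrightarrow> address_word t" by (rule LIMSEQ_word_coordinatewise)
  have "address_word t \<in> Cl" by (rule Lim_in_closed_set[OF Cl(1) _ _ lim]) (use v(1) Cl(2) in auto)
  moreover have "address_word t \<in> Sigma_N N"
  proof -
    have "address_word t k < N" for k
    proof -
      have "k < length (address t (Suc k))" using address_spec[OF t, of "Suc k"] by simp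
      hence "address t (Suc k) ! k \<in> set (address t (Suc k))" by (rule nth_mem)
      hence "address_word t k \<in> set (address t (Suc k))" unfolding address_word_def .
      thus ?thesis using Tstar_letters address_spec[OF t, of "Suc k"] by blast
    qed
    thus ?thesis by (simp add: Sigma_N_def)
  qed
  ultimately show ?thesis using Cl(2) by blast
qed

lemma Omega_eq: "\<Omega> = {0..<total_mass}" by (simp add: code_interval_def)
lemma total_mass_pos: "0 < total_mass" by (rule mass_pos[OF Nil_in_Tstar])

lemma code_interval_subset_Omega: "I \<in> Tstar T \<Longrightarrow> code_interval I \<subseteq> \<Omega>"
  using code_interval_descendant_subset[of "[]" I] by simp

lemma code_interval_borel: "code_interval I \<in> sets lborel" by (simp add: code_interval_def)

definition Omega_measure :: "real measure" where "Omega_measure = restrict_space lborel \<Omega>"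

lemma space_Omega_measure: "space Omega_measure = \<Omega>"
  by (simp add: Omega_measure_def code_interval_def)

lemma sets_Omega_measure_iff: "A \<in> sets Omega_measure \<longleftrightarrow> A \<subseteq> \<Omega> \<and> A \<in> sets lborel"
  unfolding Omega_measure_def by (rule sets_restrict_space_iff) (simp add: code_interval_def)

lemma emeasure_Omega_measure: "A \<in> sets Omega_measure \<Longrightarrow> emeasure Omega_measure A =
    emeasure lborel A"
  unfolding Omega_measure_def
    by (rule emeasure_restrict_space) (auto simp: code_interval_def sets_restrict_space_iff)

lemma address_measurable: "(\<lambda>t. address t n) \<in> measurable Omega_measure (count_space UNIV)"
  unfolding measurable_count_space_eq2_countable
proof (intro conjI ballI)
  fix I :: "nat list" assume "I \<in> UNIV"
  have "(\<lambda>t. address t n) -` {I} \<inter> space Omega_measure =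
      (if I \<in> Tstar T \<and> length I = n then code_interval I else {})"
  proof (cases "I \<in> Tstar T \<and> length I = n")
    case True
    have "(\<lambda>t. address t n) -` {I} \<inter> \<Omega> = code_interval I"
    proof (rule set_eqI)
      fix t show "t \<in> (\<lambda>t. address t n) -` {I} \<inter> \<Omega> \<longleftrightarrow> t \<in> code_interval I"
        using address_eq_iff[of t I n] True code_interval_subset_Omega[of I] by auto
    qed
    thus ?thesis using True by (simp add: space_Omega_measure)
  next
    case False
    have "(\<lambda>t. address t n) -` {I} \<inter> \<Omega> = {}"
    proof (rule set_eqI)
      fix t show "t \<in> (\<lambda>t. address t n) -` {I} \<inter> \<Omega> \<longleftrightarrow> t \<in> {}"
        using address_spec[of t n] False by auto
    qed
    thus ?thesis using False unfolding space_Omega_measure by (simp only: if_False)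
  qed
  moreover have "code_interval I \<in> sets Omega_measure" if "I \<in> Tstar T" for I
    using sets_Omega_measure_iff code_interval_subset_Omega[OF that] code_interval_borel by blast
  ultimately show "(\<lambda>t. address t n) -` {I} \<inter> space Omega_measure \<in> sets Omega_measure" by simp
qed simp

definition coding_map :: "real \<Rightarrow> 'a" where "coding_map t = limit_point (address_word t)"

lemma coding_map_LIMSEQ: "t \<in> \<Omega> \<Longrightarrow> (\<lambda>n. x (address t n)) \<longlonglongrightarrow> coding_map t"
  using limit_point_LIMSEQ[OF address_word_in_T, of t] word_prefix_address_word[of t]
    by (simp add: coding_map_def)

lemma coding_map_measurable: "coding_map \<in> borel_measurable Omega_measure"
proof (rule borel_measurable_LIMSEQ_metric)
  fix n
  show "(\<lambda>t. x (address t n)) \<in> borel_measurable Omega_measure"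
    using measurable_compose[OF address_measurable[of n], of x borel] by simp
next
  fix t assume "t \<in> space Omega_measure" thus "(\<lambda>n. x (address t n)) \<longlonglongrightarrow> coding_map t"
    using coding_map_LIMSEQ by (simp add: space_Omega_measure)
qed

lemma coding_map_in_s_set: "t \<in> \<Omega> \<Longrightarrow> coding_map t \<in> s_set T x"
  using address_word_in_T[of t] by (simp add: coding_map_def s_set_eq)

definition tree_measure :: "'a measure" where "tree_measure = distr Omega_measure borel coding_map"

lemma sets_tree_measure: "sets tree_measure = sets borel" by (simp add: tree_measure_def)

lemma emeasure_tree_measure: "A \<in> sets borel \<Longrightarrow> emeasure tree_measure A =
    emeasure lborel (coding_map -` A \<inter> \<Omega>)"
proof -
  assume A: "A \<in> sets borel"
  have "emeasure tree_measure A = emeasure Omega_measure (coding_map -` A \<inter> space Omega_measure)"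
    unfolding tree_measure_def by (rule emeasure_distr[OF coding_map_measurable A])
  moreover have "coding_map -` A \<inter> space Omega_measure \<in> sets Omega_measure"
    using coding_map_measurable A by (rule measurable_sets)
  ultimately show ?thesis using emeasure_Omega_measure by (simp add: space_Omega_measure)
qed

lemma coding_map_preimage_borel: "A \<in> sets borel \<Longrightarrow> coding_map -` A \<inter> \<Omega> \<in> sets lborel"
  using measurable_sets[OF coding_map_measurable, of A] sets_Omega_measure_iff space_Omega_measure
    by simp

lemma emeasure_tree_measure_space: "emeasure tree_measure (space tree_measure) = ennreal total_mass"
proof -
  have "space tree_measure = UNIV" by (simp add: tree_measure_def)
  hence "emeasure tree_measure (space tree_measure) = emeasure lborel (coding_map -` UNIV \<inter> \<Omega>)"
    using emeasure_tree_measure by simp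
  also have "\<dots> = ennreal total_mass" using total_mass_pos by (simp add: Omega_eq)
  finally show ?thesis .
qed

lemma emeasure_tree_measure_s_set: "emeasure tree_measure (s_set T x) = ennreal total_mass"
proof -
  have "s_set T x \<in> sets borel" using compact_s_set by (simp add: compact_imp_closed borel_closed)
  hence "emeasure tree_measure (s_set T x) = emeasure lborel (coding_map -` s_set T x \<inter> \<Omega>)"
    using emeasure_tree_measure by simp
  also have "coding_map -` s_set T x \<inter> \<Omega> = \<Omega>" using coding_map_in_s_set by auto
  also have "emeasure lborel \<Omega> = ennreal total_mass" using total_mass_pos by (simp add: Omega_eq)
  finally show ?thesis .
qed

section \<open>Regularity of the \<open>s\<close>-set\<close>

definition stop_level :: "real \<Rightarrow> (nat \<Rightarrow> nat) \<Rightarrow> nat" where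
  "stop_level \<theta> v = (LEAST n. r (word_prefix v n) \<le> \<theta>)"

definition stop_word :: "real \<Rightarrow> (nat \<Rightarrow> nat) \<Rightarrow> nat list" where
  "stop_word \<theta> v = word_prefix v (stop_level \<theta> v)"

lemma stop_word_in_Tstar: "v \<in> T \<Longrightarrow> stop_word \<theta> v \<in> Tstar T"
  unfolding stop_word_def by (rule prefix_in_Tstar)

lemma length_stop_word: "length (stop_word \<theta> v) = stop_level \<theta> v" by (simp add: stop_word_def)

lemma stop_level_bound:
  assumes v: "v \<in> T" and th: "\<theta> > 0" and M: "\<forall>I\<in>Tstar T. length I \<ge> M \<longrightarrow> r I < \<theta>"
  shows "r (stop_word \<theta> v) \<le> \<theta>" "stop_level \<theta> v \<le> M"
proof -
  have rM: "r (word_prefix v M) \<le> \<theta>" using bspec[OF M prefix_in_Tstar[OF v, of M]] by simp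
  show "r (stop_word \<theta> v) \<le> \<theta>" unfolding stop_word_def stop_level_def
    by (rule LeastI[of "\<lambda>n. r (word_prefix v n) \<le> \<theta>", OF rM])
  show "stop_level \<theta> v \<le> M" unfolding stop_level_def
    by (rule Least_le[of "\<lambda>n. r (word_prefix v n) \<le> \<theta>", OF rM])
qed

lemma radius_stop_word_le: "v \<in> T \<Longrightarrow> \<theta> > 0 \<Longrightarrow> r (stop_word \<theta> v) \<le> \<theta>"
  using T4[of \<theta>] stop_level_bound by blast

lemma length_stop_word_le: "v \<in> T \<Longrightarrow> \<theta> > 0 \<Longrightarrow> \<forall>I\<in>Tstar T. length I \<ge> M \<longrightarrow> r I < \<theta> \<Longrightarrow>
    length (stop_word \<theta> v) \<le> M"
  using stop_level_bound(2) length_stop_word by simp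

lemma radius_stop_word_gt:
  assumes v: "v \<in> T" and th: "\<theta> > 0" "\<theta> < r []"
  shows "r (stop_word \<theta> v) > \<rho> * \<theta>"
proof -
  have rs: "r (word_prefix v (stop_level \<theta> v)) \<le> \<theta>" using radius_stop_word_le[OF v th(1)]
    by (simp add: stop_word_def)
  have "stop_level \<theta> v \<noteq> 0"
  proof
    assume "stop_level \<theta> v = 0" thus False using rs th by (simp add: word_prefix_def)
  qed
  then obtain k where k: "stop_level \<theta> v = Suc k" by (cases "stop_level \<theta> v") auto
  have "k < stop_level \<theta> v" using k by simp
  hence nk: "\<not> r (word_prefix v k) \<le> \<theta>" unfolding stop_level_def by (rule not_less_Least)
  have vk: "v k < N" using v T_subset by (auto simp: Sigma_N_def)
  have "word_prefix v k @ [v k] \<in> Tstar T" using prefix_in_Tstar[OF v, of "Suc k"]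
    by (simp add: word_prefix_Suc)
  hence "r (word_prefix v k @ [v k]) \<ge> \<rho> * r (word_prefix v k)" using T5 vk by blast
  moreover have "\<rho> * r (word_prefix v k) > \<rho> * \<theta>" using nk rho_pos by simp
  ultimately show ?thesis by (simp add: stop_word_def k word_prefix_Suc)
qed

lemma stop_word_eq_if_comparable:
  assumes v: "v \<in> T" and v': "v' \<in> T" and th: "\<theta> > 0"
    and nc: "\<not> incomparable (stop_word \<theta> v) (stop_word \<theta> v')" and le: "stop_level \<theta> v \<le>
        stop_level \<theta> v'"
  shows "stop_word \<theta> v = stop_word \<theta> v'"
proof -
  have e1: "stop_word \<theta> v = take (stop_level \<theta> v) (stop_word \<theta> v')"
    using not_incomparable_prefix[OF nc] le by (simp add: length_stop_word)
  also have "\<dots> = word_prefix v' (stop_level \<theta> v)" unfolding stop_word_def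
    by (rule take_word_prefix[OF le])
  finally have e: "stop_word \<theta> v = word_prefix v' (stop_level \<theta> v)" .
  have "r (word_prefix v' (stop_level \<theta> v)) \<le> \<theta>" using radius_stop_word_le[OF v th] e by simp
  hence "stop_level \<theta> v' \<le> stop_level \<theta> v" unfolding stop_level_def[of \<theta> v'] by (rule Least_le)
  hence "stop_level \<theta> v' = stop_level \<theta> v" using le by simp
  thus ?thesis using e by (simp add: stop_word_def)
qed

lemma stop_words_incomparable:
  assumes v: "v \<in> T" and v': "v' \<in> T" and th: "\<theta> > 0" and ne: "stop_word \<theta> v \<noteq> stop_word \<theta> v'"
  shows "incomparable (stop_word \<theta> v) (stop_word \<theta> v')"
proof (rule ccontr)
  assume nc: "\<not> incomparable (stop_word \<theta> v) (stop_word \<theta> v')"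
  show False
  proof (cases "stop_level \<theta> v \<le> stop_level \<theta> v'")
    case True thus False using stop_word_eq_if_comparable[OF v v' th nc] ne by simp
  next
    case False
    have nc': "\<not> incomparable (stop_word \<theta> v') (stop_word \<theta> v)" using nc
      unfolding incomparable_def min.commute[of "length (stop_word \<theta> v)"] by (simp add: eq_commute)
    show False using stop_word_eq_if_comparable[OF v' v th nc'] False ne by simp
  qed
qed

lemma stop_word_address_word: "t \<in> \<Omega> \<Longrightarrow> stop_word \<theta> (address_word t) =
    address t (stop_level \<theta> (address_word t))"
  unfolding stop_word_def by (rule word_prefix_address_word)

lemma in_code_interval_stop_word: "t \<in> \<Omega> \<Longrightarrow> t \<in> code_interval (stop_word \<theta> (address_word t))"
  using stop_word_address_word address_spec by simp

lemma dist_stop_word: "v \<in> T \<Longrightarrow> dist (x (stop_word \<theta> v)) (limit_point v) \<le> D * r (stop_word \<theta> v)"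
  unfolding stop_word_def by (rule dist_limit_point)

lemma address_word_prefix: "I \<in> Tstar T \<Longrightarrow> t \<in> code_interval I \<Longrightarrow>
    word_prefix (address_word t) (length I) = I"
proof -
  assume I: "I \<in> Tstar T" and t: "t \<in> code_interval I"
  have tO: "t \<in> \<Omega>" using code_interval_subset_Omega[OF I] t by blast
  have "address t (length I) = I" using address_eq_iff[OF tO I refl] t by simp
  thus ?thesis using word_prefix_address_word[OF tO] by simp
qed

lemma emeasure_code_interval: "emeasure lborel (code_interval I) = ennreal (mass I)"
  unfolding code_interval_def using mass_nonneg[of I] by simp

lemma emeasure_tree_measure_ball: "emeasure tree_measure (ball z e) =
    emeasure lborel (coding_map -` ball z e \<inter> \<Omega>)"
  by (rule emeasure_tree_measure) simp

lemma tree_measure_ball_lower: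
  assumes v: "v \<in> T" and e: "0 < e" and small: "e / (4 * D) < r []"
  shows "emeasure tree_measure (ball (limit_point v) e) \<ge> ennreal ((\<rho> * (e / (4 * D))) powr s)"
proof -
  define \<theta> where "\<theta> = e / (4 * D)"
  have th: "\<theta> > 0" using e D_pos by (simp add: \<theta>_def)
  define I where "I = stop_word \<theta> v"
  have I: "I \<in> Tstar T" unfolding I_def by (rule stop_word_in_Tstar[OF v])
  have rI: "r I \<le> \<theta>" unfolding I_def by (rule radius_stop_word_le[OF v th])
  have rI2: "r I > \<rho> * \<theta>" unfolding I_def
    by (rule radius_stop_word_gt[OF v th]) (simp add: \<theta>_def small)
  have d1: "dist (x I) (limit_point v) \<le> D * r I" unfolding I_def by (rule dist_stop_word[OF v])
  have sub: "code_interval I \<subseteq> coding_map -` ball (limit_point v) e \<inter> \<Omega>"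
  proof
    fix t assume t: "t \<in> code_interval I"
    have tO: "t \<in> \<Omega>" using code_interval_subset_Omega[OF I] t by blast
    have wp: "word_prefix (address_word t) (length I) = I" by (rule address_word_prefix[OF I t])
    have "dist (x (word_prefix (address_word t) (length I))) (limit_point (address_word t)) \<le>
        D * r (word_prefix (address_word t) (length I))"
      by (rule dist_limit_point[OF address_word_in_T[OF tO]])
    hence d2: "dist (x I) (coding_map t) \<le> D * r I" unfolding wp coding_map_def .
    have "dist (limit_point v) (coding_map t) \<le> dist (x I) (limit_point v) +
        dist (x I) (coding_map t)" by (rule dist_triangle3)
    also have "\<dots> \<le> 2 * D * \<theta>"
    proof -
      have "D * r I \<le> D * \<theta>" using rI D_pos by (simp add: mult_left_mono)
      thus ?thesis using d1 d2 by linarith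
    qed
    also have "\<dots> < e" using e D_pos by (simp add: \<theta>_def)
    finally show "t \<in> coding_map -` ball (limit_point v) e \<inter> \<Omega>" using tO by simp
  qed
  have "ennreal ((\<rho> * \<theta>) powr s) \<le> ennreal (mass I)"
    unfolding mass_def using rI2 rho_pos th s_nonneg by (intro ennreal_leI powr_mono2) auto
  also have "\<dots> = emeasure lborel (code_interval I)" by (simp add: emeasure_code_interval)
  also have "\<dots> \<le> emeasure lborel (coding_map -` ball (limit_point v) e \<inter> \<Omega>)"
    by (rule emeasure_mono[OF sub coding_map_preimage_borel]) simp
  also have "\<dots> = emeasure tree_measure (ball (limit_point v) e)"
    by (simp add: emeasure_tree_measure_ball)
  finally show ?thesis by (simp add: \<theta>_def)
qed

lemma stop_words_separated:
  assumes v: "v \<in> T" "v' \<in> T" and \<theta>: "0 < \<theta>" "\<theta> < r []"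
    and ne: "stop_word \<theta> v \<noteq> stop_word \<theta> v'"
  shows "2 * (C * \<rho> * \<theta>) \<le> dist (x (stop_word \<theta> v)) (x (stop_word \<theta> v'))"
proof -
  have "C * (r (stop_word \<theta> v) + r (stop_word \<theta> v')) \<le>
      dist (x (stop_word \<theta> v)) (x (stop_word \<theta> v'))"
    using stop_words_incomparable[OF v \<theta>(1) ne] by (intro T1 stop_word_in_Tstar v)
  moreover have "C * (\<rho> * \<theta> + \<rho> * \<theta>) \<le> C * (r (stop_word \<theta> v) + r (stop_word \<theta> v'))"
    using radius_stop_word_gt[OF v(1) \<theta>] radius_stop_word_gt[OF v(2) \<theta>] C_pos
    by (intro mult_left_mono) auto
  ultimately show ?thesis by (simp add: algebra_simps)
qed

text \<open>Upper mass bound: the stopping words at scale \<open>\<theta>\<close> of the points of a ball of radius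
  \<open>\<theta>\<close> have their points \<open>x\<^sub>I\<close> in a ball of radius \<open>(1 + D) \<theta>\<close> and pairwise
  \<open>2 C \<rho> \<theta>\<close> apart, so by the doubling property there are boundedly many.\<close>

lemma card_stop_words_le:
  assumes cover: "\<And>(z' :: 'a) R. 0 < R \<Longrightarrow> \<exists>G. finite G \<and> card G \<le> M \<and> ball z' R \<subseteq>
      (\<Union>y\<in>G. ball y (R / 2 ^ k))"
    and k: "1 + D \<le> C * \<rho> * 2 ^ k" and \<theta>: "0 < \<theta>" "\<theta> < r []"
    and V: "V \<subseteq> T" "\<And>v. v \<in> V \<Longrightarrow> dist z (limit_point v) < \<theta>"
  shows "card (stop_word \<theta> ` V) \<le> M"
proof -
  let ?F = "stop_word \<theta> ` V"
  define \<delta> where "\<delta> = (1 + D) * \<theta> / 2 ^ k"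
  have \<delta>_pos: "0 < \<delta>" using \<theta> D_pos by (simp add: \<delta>_def)
  have "(1 + D) * \<theta> \<le> (C * \<rho> * \<theta>) * 2 ^ k"
    using mult_right_mono[OF k, of \<theta>] \<theta> by (simp add: mult_ac)
  hence \<delta>: "\<delta> \<le> C * \<rho> * \<theta>" unfolding \<delta>_def by (simp add: divide_le_eq)
  have sep: "2 * \<delta> \<le> dist (x I) (x J)" if IJ: "I \<in> ?F" "J \<in> ?F" "I \<noteq> J" for I J
  proof -
    obtain v v' where v: "v \<in> V" "v' \<in> V" "I = stop_word \<theta> v" "J = stop_word \<theta> v'"
      using IJ(1,2) by blast
    have "2 * (C * \<rho> * \<theta>) \<le> dist (x I) (x J)"
      unfolding v(3,4)
      by (rule stop_words_separated[OF subsetD[OF V(1) v(1)] subsetD[OF V(1) v(2)] \<theta>])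
        (use IJ(3) v in simp)
    thus ?thesis using \<delta> by linarith
  qed
  have "inj_on x ?F"
  proof (rule inj_onI, rule ccontr)
    fix I J assume "I \<in> ?F" "J \<in> ?F" "x I = x J" "I \<noteq> J"
    thus False using sep[of I J] \<delta>_pos by simp
  qed
  have near: "x ` ?F \<subseteq> ball z ((1 + D) * \<theta>)"
  proof
    fix p assume "p \<in> x ` ?F"
    then obtain v where v: "v \<in> V" "p = x (stop_word \<theta> v)" by blast
    have vT: "v \<in> T" using v(1) V(1) by blast
    have "D * r (stop_word \<theta> v) \<le> D * \<theta>"
      using radius_stop_word_le[OF vT \<theta>(1)] D_pos by (intro mult_left_mono) auto
    hence "dist p (limit_point v) \<le> D * \<theta>" using dist_stop_word[OF vT, of \<theta>] v(2) by simp
    moreover have "dist z p \<le> dist z (limit_point v) + dist p (limit_point v)"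
      by (rule dist_triangle2)
    ultimately have "dist z p < \<theta> + D * \<theta>" using V(2)[OF v(1)] by linarith
    thus "p \<in> ball z ((1 + D) * \<theta>)" by (simp add: distrib_right)
  qed
  have "0 < (1 + D) * \<theta>" using \<theta> D_pos by simp
  then obtain G where G: "finite G" "card G \<le> M" "ball z ((1 + D) * \<theta>) \<subseteq> (\<Union>y\<in>G. ball y \<delta>)"
    using cover[of "(1 + D) * \<theta>" z] unfolding \<delta>_def by blast
  have "card (x ` ?F) \<le> card G"
  proof (rule separated_subset_card_le[OF G(1)])
    show "x ` ?F \<subseteq> (\<Union>y\<in>G. ball y \<delta>)" using near G(3) by blast
    show "separated (2 * \<delta>) (x ` ?F)" unfolding separated_def
    proof (intro ballI impI)
      fix p q assume pq: "p \<in> x ` ?F" "q \<in> x ` ?F" "p \<noteq> q"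
      then obtain I J where "I \<in> ?F" "J \<in> ?F" "p = x I" "q = x J" by blast
      thus "2 * \<delta> \<le> dist p q" using sep[of I J] pq(3) by (cases "I = J") auto
    qed
  qed
  thus ?thesis using card_image[OF \<open>inj_on x ?F\<close>] G(2) by simp
qed

lemma tree_measure_ball_upper:
  assumes cover: "\<And>(z' :: 'a) R. 0 < R \<Longrightarrow> \<exists>G. finite G \<and> card G \<le> M \<and> ball z' R \<subseteq>
      (\<Union>y\<in>G. ball y (R / 2 ^ k))"
    and k: "1 + D \<le> C * \<rho> * 2 ^ k" and e: "0 < e" "e < r []"
  shows "emeasure tree_measure (ball z e) \<le> ennreal (real M * e powr s)"
proof -
  define A where "A = coding_map -` ball z e \<inter> \<Omega>"
  define V where "V = address_word ` A"
  define F where "F = stop_word e ` V"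
  have VT: "V \<subseteq> T" using address_word_in_T by (auto simp: V_def A_def)
  have FT: "F \<subseteq> Tstar T" using VT stop_word_in_Tstar by (auto simp: F_def)
  obtain m where m: "\<forall>I\<in>Tstar T. m \<le> length I \<longrightarrow> r I < e" using T4[OF e(1)] by blast
  have "F \<subseteq> {J \<in> Tstar T. length J \<le> m}"
    using FT VT length_stop_word_le[OF _ e(1) m] by (auto simp: F_def)
  hence finF: "finite F" using finite_Tstar_length_le by (rule finite_subset)
  have cardF: "card F \<le> M" unfolding F_def
    by (rule card_stop_words_le[OF cover k e VT]) (auto simp: V_def A_def coding_map_def)
  have "A \<subseteq> (\<Union>I\<in>F. code_interval I)"
    using in_code_interval_stop_word by (force simp: F_def V_def A_def)
  hence "emeasure tree_measure (ball z e) \<le> emeasure lborel (\<Union>I\<in>F. code_interval I)"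
    unfolding emeasure_tree_measure_ball A_def[symmetric]
    by (rule emeasure_mono) (use finF code_interval_borel in auto)
  also have "\<dots> \<le> (\<Sum>I\<in>F. emeasure lborel (code_interval I))"
    by (rule emeasure_subadditive_finite[OF finF]) (use code_interval_borel in auto)
  also have "\<dots> = ennreal (\<Sum>I\<in>F. mass I)"
    by (simp add: emeasure_code_interval mass_nonneg sum_ennreal)
  also have "(\<Sum>I\<in>F. mass I) \<le> (\<Sum>I\<in>F. e powr s)"
  proof (rule sum_mono)
    fix I assume I: "I \<in> F"
    then obtain v where "v \<in> V" "I = stop_word e v" by (auto simp: F_def)
    hence "r I \<le> e" using VT radius_stop_word_le e by blast
    thus "mass I \<le> e powr s" unfolding mass_def using r_pos I FT s_nonneg
      by (intro powr_mono2) (auto simp: less_imp_le)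
  qed
  also have "\<dots> \<le> real M * e powr s" using cardF by (simp add: mult_right_mono)
  finally show ?thesis by (simp add: ennreal_leI)
qed

lemma s_regular_s_set:
  assumes doubling: "doubling_space TYPE('a)"
  shows "s_regular s (s_set T x)"
proof -
  obtain M :: nat where M: "\<And>(z::'a) R k. 0 < R \<Longrightarrow>
      \<exists>G. finite G \<and> card G \<le> M ^ k \<and> ball z R \<subseteq> (\<Union>y\<in>G. ball y (R / 2 ^ k))"
    using doubling_space_iterate[OF doubling] by blast
  obtain k :: nat where "(1 + D) / (C * \<rho>) < 2 ^ k"
    using real_arch_pow[of 2 "(1 + D) / (C * \<rho>)"] by auto
  hence k: "1 + D \<le> C * \<rho> * 2 ^ k" using C_pos rho_pos by (simp add: divide_less_eq mult.commute)
  define R0 where "R0 = min (r [] / 2) (D * r [])"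
  define \<alpha> where "\<alpha> = (\<rho> / (4 * D)) powr s / 2"
  define \<beta> where "\<beta> = real (M ^ k) + 1"
  have r0: "0 < r []" by (rule r_pos[OF Nil_in_Tstar])
  have pos: "0 < R0" "0 < \<alpha>" using r0 D_pos rho_pos by (simp_all add: R0_def \<alpha>_def)
  have "0 < \<beta>" unfolding \<beta>_def by (rule add_nonneg_pos) simp_all
  have bounds: "ennreal (\<alpha> * e powr s) < emeasure tree_measure (ball z e) \<and>
      emeasure tree_measure (ball z e) < ennreal (\<beta> * e powr s)"
    if z: "z \<in> s_set T x" and e: "0 < e" "e \<le> R0" for z e
  proof
    obtain v where v: "v \<in> T" "z = limit_point v" using z by (auto simp: s_set_eq)
    have "e / (4 * D) \<le> D * r [] / (4 * D)" using e D_pos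
      by (intro divide_right_mono) (auto simp: R0_def)
    also have "\<dots> < r []" using D_pos r0 by simp
    finally have small: "e / (4 * D) < r []" .
    have "(\<rho> * (e / (4 * D))) powr s = (\<rho> / (4 * D)) powr s * e powr s"
      by (simp add: powr_mult[symmetric] field_simps)
    moreover have "\<alpha> * e powr s < (\<rho> / (4 * D)) powr s * e powr s"
      using e rho_pos D_pos by (simp add: \<alpha>_def)
    ultimately have "\<alpha> * e powr s < (\<rho> * (e / (4 * D))) powr s" by simp
    hence "ennreal (\<alpha> * e powr s) < ennreal ((\<rho> * (e / (4 * D))) powr s)"
      using pos e by (subst ennreal_less_iff) auto
    also have "\<dots> \<le> emeasure tree_measure (ball z e)"
      using tree_measure_ball_lower[OF v(1) e(1) small] v(2) by simp
    finally show "ennreal (\<alpha> * e powr s) < emeasure tree_measure (ball z e)" .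
    have "emeasure tree_measure (ball z e) \<le> ennreal (real (M ^ k) * e powr s)"
      using e r0 by (intro tree_measure_ball_upper[OF M k]) (auto simp: R0_def)
    also have "\<dots> < ennreal (\<beta> * e powr s)"
      using e by (subst ennreal_less_iff) (auto simp: \<beta>_def distrib_right)
    finally show "emeasure tree_measure (ball z e) < ennreal (\<beta> * e powr s)" .
  qed
  have "0 < emeasure tree_measure (s_set T x)"
    using emeasure_tree_measure_s_set total_mass_pos by simp
  moreover have "emeasure tree_measure (space tree_measure) < \<infinity>"
    using emeasure_tree_measure_space by simp
  ultimately show ?thesis
    unfolding s_regular_def using compact_s_set sets_tree_measure pos \<open>0 < \<beta>\<close> bounds by blast
qed

end

lemma s_tree_structure_of_s_tree:
  assumes "s_tree N s T x r" and "closedin (top_of_set (Sigma_N N)) T"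
  obtains \<rho> C D where "s_tree_structure N s T x r \<rho> C D"
proof -
  from assms(1) obtain \<rho> C D where
    a: "N \<ge> 2" "s \<ge> 0" "T \<noteq> {}" "T \<subseteq> Sigma_N N" "\<forall>I \<in> Tstar T. 0 < r I" "0 < \<rho>" "0 < C" "0 < D"
    and t1: "\<forall>I \<in> Tstar T. \<forall>J \<in> Tstar T. incomparable I J \<longrightarrow> dist (x I) (x J) \<ge> C * (r I + r J)"
    and t2: "\<forall>I \<in> Tstar T. bounded {x (I @ J) | J. I @ J \<in> Tstar T} \<and>
      diameter {x (I @ J) | J. I @ J \<in> Tstar T} \<le> D * r I"
    and t3: "\<forall>I \<in> Tstar T. \<forall>n::nat.
      (\<Sum>J \<in> {J. length J = n \<and> I @ J \<in> Tstar T}. r (I @ J) powr s) = r I powr s"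
    and t4: "\<forall>\<epsilon>>0. \<exists>m. \<forall>I \<in> Tstar T. length I \<ge> m \<longrightarrow> r I < \<epsilon>"
    and t5: "\<forall>I j. j < N \<longrightarrow> I @ [j] \<in> Tstar T \<longrightarrow> r (I @ [j]) \<ge> \<rho> * r I"
    unfolding s_tree_def by blast
  have "s_tree_structure N s T x r \<rho> C D"
    by unfold_locales (use a t1 t2 t3 t4 t5 assms(2) in auto)
  thus thesis by (rule that)
qed

theorem mainTheorem4:
  fixes N :: nat and s :: real and T :: "(nat \<Rightarrow> nat) set"
    and x :: "nat list \<Rightarrow> 'a::complete_space" and r :: "nat list \<Rightarrow> real"
  assumes "doubling_space TYPE('a)"
    and "s_tree N s T x r"
    and "closedin (top_of_set (Sigma_N N)) T"
  shows "s_regular s (s_set T x) \<and> hausdorff_dim (s_set T x) = upper_minkowski_dim (s_set T x)"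
proof -
  obtain \<rho> C D where "s_tree_structure N s T x r \<rho> C D"
    using assms(2,3) by (rule s_tree_structure_of_s_tree)
  then interpret s_tree_structure N s T x r \<rho> C D .
  have regular: "s_regular s (s_set T x)" by (rule s_regular_s_set[OF assms(1)])
  show ?thesis
    using regular s_regular_hausdorff_dim[OF regular s_nonneg]
        s_regular_upper_minkowski_dim[OF regular]
    by simp
qed

end
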